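(* Suppose the constraint qualification below holds, let $\{(x^k,y^k,z^k)\}$ be generated by Algorithm G-ADMM-M with parameters $\sigma>0$, $\rho\in(0,2)$, and let $(\bar x,\bar y,\bar z)\in\mathbb{W}^*$. Let $\lambda\in(0,1]$. Then for every integer $k>1$, $$\Big(\Psi_k(\bar x,\bar y,\bar z)+(2-\rho)\|\widetilde x^k-x^k\|^2_{\widehat\Sigma_{f_1}+\mathcal S}+\sigma(1-\lambda)(2-\rho)\|\mathcal{A}^*x^k+\mathcal{B}^*y^{k-1}-c\|^2\Big)$$ $$-\Big(\Psi_{k+1}(\bar x,\bar y,\bar z)+(2-\rho)\|\widetilde x^{k+1}-x^{k+1}\|^2_{\widehat\Sigma_{f_1}+\mathcal S}+\sigma(1-\lambda)(2-\rho)\|\mathcal{A}^*x^{k+1}+\mathcal{B}^*y^{k}-c\|^2\Big)\ \ge\ \delta_k-\xi_k.$$ Moreover, if $\lambda\in(\tfrac12,1]$, $\widehat\Sigma_{h_1}+\mathcal T\succ0$, $\mathcal F\succ0$, $\mathcal H\succ0$, and $\sum_{k=1}^\infty\xi_k<+\infty$, then $\{(x^k,y^k)\}$ converges to an optimal solution of the problem and $\{z^k\}$ converges to an optimal solution of its dual problem (a Lagrange multiplier $z$ such that the limit triple lies in $\mathbb{W}^*$).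
   Context: Let $\mathbb{X},\mathbb{Y},\mathbb{Z}$ be finite-dimensional real Euclidean spaces with inner product $\langle\cdot,\cdot\rangle$ and induced norm $\|\cdot\|$. For a self-adjoint linear operator $\mathcal{G}$, $\|u\|_{\mathcal G}^2:=\langle u,\mathcal G u\rangle$. Let $f_1:\mathbb{X}\to\mathbb{R}$ and $h_1:\mathbb{Y}\to\mathbb{R}$ be convex, continuously differentiable with globally Lipschitz continuous gradients, and $f_2:\mathbb{X}\to(-\infty,+\infty]$, $h_2:\mathbb{Y}\to(-\infty,+\infty]$ closed proper convex. Let $\mathcal{A}:\mathbb{Z}\to\mathbb{X}$, $\mathcal{B}:\mathbb{Z}\to\mathbb{Y}$ be linear with adjoints $\mathcal{A}^*,\mathcal{B}^*$, and $c\in\mathbb{Z}$. The problem is $\min\{f_1(x)+f_2(x)+h_1(y)+h_2(y): \mathcal{A}^*x+\mathcal{B}^*y=c\}$. Let $\Sigma_{f_1}\preceq\widehat\Sigma_{f_1}$ be self-adjoint positive semidefinite operators on $\mathbb{X}$ with $\tfrac12\|x-x'\|_{\Sigma_{f_1}}^2\le f_1(x)-f_1(x')-\langle x-x',\nabla f_1(x')\rangle\le\tfrac12\|x-x'\|_{\widehat\Sigma_{f_1}}^2$ for all $x,x'$, and likewise $\Sigma_{h_1}\preceq\widehat\Sigma_{h_1}$ on $\mathbb{Y}$ for $h_1$. Constraint qualification: there exists $(x^0,y^0)\in\operatorname{ri}(\operatorname{dom}f_2\times\operatorname{dom}h_2)$ with $\mathcal{A}^*x^0+\mathcal{B}^*y^0=c$.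 $\mathbb{W}^*$ denotes the set of $(\bar x,\bar y,\bar z)\in\mathbb{X}\times\mathbb{Y}\times\mathbb{Z}$ with $0\in\partial f_2(\bar x)+\nabla f_1(\bar x)+\mathcal{A}\bar z$, $0\in\partial h_2(\bar y)+\nabla h_1(\bar y)+\mathcal{B}\bar z$, $\mathcal{A}^*\bar x+\mathcal{B}^*\bar y=c$. Algorithm G-ADMM-M: choose $\sigma>0$, $\rho\in(0,2)$, self-adjoint positive semidefinite $\mathcal S$ on $\mathbb{X}$ and $\mathcal T$ on $\mathbb{Y}$ such that $\mathcal F:=\widehat\Sigma_{f_1}+\mathcal S+\sigma\mathcal{A}\mathcal{A}^*\succ0$ and $\mathcal H:=\widehat\Sigma_{h_1}+\mathcal T+\sigma\mathcal{B}\mathcal{B}^*\succ0$, and $\widetilde\omega^0=(\widetilde x^0,\widetilde y^0,\widetilde z^0)\in\operatorname{dom}f_2\times\operatorname{dom}h_2\times\mathbb{Z}$. For $k=0,1,2,\dots$: $x^k=\arg\min_x\{f_2(x)+\tfrac12\langle x,\mathcal F x\rangle+\langle\nabla f_1(\widetilde x^k)+\sigma\mathcal{A}(\mathcal{A}^*\widetilde x^k+\mathcal{B}^*\widetilde y^k-c+\sigma^{-1}\widetilde z^k)-\mathcal F\widetilde x^k,x\rangle\}$; $z^k=\widetilde z^k+\sigma(\mathcal{A}^*x^k+\mathcal{B}^*\widetilde y^k-c)$; $y^k=\arg\min_y\{h_2(y)+\tfrac12\langle y,\mathcal H y\rangle+\langle\nabla h_1(\widetilde y^k)+\sigma\mathcal{B}(\mathcal{A}^*x^k+\mathcal{B}^*\widetilde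 y^k-c+\sigma^{-1}z^k)-\mathcal H\widetilde y^k,y\rangle\}$; $\widetilde\omega^{k+1}=\widetilde\omega^k+\rho(\omega^k-\widetilde\omega^k)$ where $\omega^k=(x^k,y^k,z^k)$, $\widetilde\omega^k=(\widetilde x^k,\widetilde y^k,\widetilde z^k)$. Notation: for fixed $(\bar x,\bar y,\bar z)$, $x_e^k:=x^k-\bar x$, $y_e^k:=y^k-\bar y$, $z_e^k:=z^k-\bar z$, $\widetilde x_e^k:=\widetilde x^k-\bar x$, $\widetilde y_e^k:=\widetilde y^k-\bar y$. Define $\Psi_k(\bar x,\bar y,\bar z):=\frac{1}{\sigma\rho}\|z_e^k+\sigma(\rho-1)\mathcal{A}^*x_e^k\|^2+\sigma(2-\rho)\|\mathcal{A}^*x_e^k\|^2+\frac1\rho\|\widetilde x_e^{k+1}\|^2_{\widehat\Sigma_{f_1}+\mathcal S}+\frac1\rho\|\widetilde y_e^{k}\|^2_{\widehat\Sigma_{h_1}+\mathcal T}$; $\delta_k:=\|\widetilde x^{k+1}-x^{k+1}\|^2_{\frac12\Sigma_{f_1}}+\|\widetilde y^k-y^k\|^2_{\frac12\Sigma_{h_1}+(2-\rho)(\widehat\Sigma_{h_1}+\mathcal T)}+(1-\lambda)(2-\rho)\|\widetilde x^k-x^k\|^2_{\widehat\Sigma_{f_1}+\mathcal S}+\sigma(2\lambda-1)(2-\rho)\|\mathcal{A}^*x^{k+1}+\mathcal{B}^*y^k-c\|^2+\frac{\sigma(1-\lambda)(2-\rho)}{2}\|\mathcal{B}^*(y^k-y^{k-1})\|^2+\frac{\lambda(2-\rho)^2}{\rho}\|x^{k+1}-x^k\|^2_{\widehat\Sigma_{f_1}+\mathcal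 S+\sigma\mathcal{A}\mathcal{A}^*}$; $\xi_k:=\|\widetilde x^{k+1}-x^{k+1}\|^2_{\widehat\Sigma_{f_1}}+\|\widetilde y^k-y^k\|^2_{\widehat\Sigma_{h_1}}$. *)

theory Defs
  imports "HOL-Analysis.Analysis"
begin

definition psd_op :: "('a::euclidean_space \<Rightarrow> 'a) \<Rightarrow> bool" where
  "psd_op G \<longleftrightarrow> linear G \<and> (\<forall>u v. G u \<bullet> v = u \<bullet> G v) \<and> (\<forall>u. 0 \<le> u \<bullet> G u)"

definition pd_op :: "('a::euclidean_space \<Rightarrow> 'a) \<Rightarrow> bool" where
  "pd_op G \<longleftrightarrow> psd_op G \<and> (\<forall>u. u \<noteq> 0 \<longrightarrow> 0 < u \<bullet> G u)"

definition opadd :: "('a::real_vector \<Rightarrow> 'a) \<Rightarrow> ('a \<Rightarrow> 'a) \<Rightarrow> 'a \<Rightarrow> 'a" where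
  "opadd G K = (\<lambda>u. G u + K u)"

definition qn :: "('a::real_inner \<Rightarrow> 'a) \<Rightarrow> 'a \<Rightarrow> real" where
  "qn G u = u \<bullet> G u"

definition edom :: "('a \<Rightarrow> ereal) \<Rightarrow> 'a set" where
  "edom f = {x. f x < \<infinity>}"

definition proper_fun :: "('a \<Rightarrow> ereal) \<Rightarrow> bool" where
  "proper_fun f \<longleftrightarrow> (\<forall>x. f x \<noteq> -\<infinity>) \<and> (\<exists>x. f x < \<infinity>)"

definition convex_fun :: "('a::real_vector \<Rightarrow> ereal) \<Rightarrow> bool" where
  "convex_fun f \<longleftrightarrow> convex {(x, t::real). f x \<le> ereal t}"

definition closed_fun :: "('a::real_normed_vector \<Rightarrow> ereal) \<Rightarrow> bool" where
  "closed_fun f \<longleftrightarrow> closed {(x, t::real). f x \<le> ereal t}"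

definition subdiff :: "('a::real_inner \<Rightarrow> ereal) \<Rightarrow> 'a \<Rightarrow> 'a set" where
  "subdiff f x = {g. f x \<noteq> \<infinity> \<and> (\<forall>y. f x + ereal (g \<bullet> (y - x)) \<le> f y)}"

text \<open>KKT set W* for  min f1 x + f2 x + h1 y + h2 y  s.t.  A* x + B* y = c.\<close>
definition Wstar ::
  "('x::euclidean_space \<Rightarrow> 'x) \<Rightarrow> ('x \<Rightarrow> ereal) \<Rightarrow> ('y::euclidean_space \<Rightarrow> 'y) \<Rightarrow> ('y \<Rightarrow> ereal)
   \<Rightarrow> ('z::euclidean_space \<Rightarrow> 'x) \<Rightarrow> ('z \<Rightarrow> 'y) \<Rightarrow> 'z \<Rightarrow> ('x \<times> 'y \<times> 'z) set" where
  "Wstar gf1 f2 gh1 h2 A B c =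
     {(x, y, z). (\<exists>g\<in>subdiff f2 x. g + gf1 x + A z = 0)
               \<and> (\<exists>g\<in>subdiff h2 y. g + gh1 y + B z = 0)
               \<and> adjoint A x + adjoint B y = c}"

definition primal_obj ::
  "('x \<Rightarrow> real) \<Rightarrow> ('x \<Rightarrow> ereal) \<Rightarrow> ('y \<Rightarrow> real) \<Rightarrow> ('y \<Rightarrow> ereal) \<Rightarrow> 'x \<Rightarrow> 'y \<Rightarrow> ereal" where
  "primal_obj f1 f2 h1 h2 x y = ereal (f1 x) + f2 x + ereal (h1 y) + h2 y"

definition lagrangian ::
  "('x::euclidean_space \<Rightarrow> real) \<Rightarrow> ('x \<Rightarrow> ereal) \<Rightarrow> ('y::euclidean_space \<Rightarrow> real) \<Rightarrow> ('y \<Rightarrow> ereal)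
   \<Rightarrow> ('z::euclidean_space \<Rightarrow> 'x) \<Rightarrow> ('z \<Rightarrow> 'y) \<Rightarrow> 'z \<Rightarrow> 'x \<Rightarrow> 'y \<Rightarrow> 'z \<Rightarrow> ereal" where
  "lagrangian f1 f2 h1 h2 A B c x y z =
     primal_obj f1 f2 h1 h2 x y + ereal (z \<bullet> (adjoint A x + adjoint B y - c))"

definition dual_fun ::
  "('x::euclidean_space \<Rightarrow> real) \<Rightarrow> ('x \<Rightarrow> ereal) \<Rightarrow> ('y::euclidean_space \<Rightarrow> real) \<Rightarrow> ('y \<Rightarrow> ereal)
   \<Rightarrow> ('z::euclidean_space \<Rightarrow> 'x) \<Rightarrow> ('z \<Rightarrow> 'y) \<Rightarrow> 'z \<Rightarrow> 'z \<Rightarrow> ereal" where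
  "dual_fun f1 f2 h1 h2 A B c z = (INF p. lagrangian f1 f2 h1 h2 A B c (fst p) (snd p) z)"

definition primal_optimal ::
  "('x::euclidean_space \<Rightarrow> real) \<Rightarrow> ('x \<Rightarrow> ereal) \<Rightarrow> ('y::euclidean_space \<Rightarrow> real) \<Rightarrow> ('y \<Rightarrow> ereal)
   \<Rightarrow> ('z::euclidean_space \<Rightarrow> 'x) \<Rightarrow> ('z \<Rightarrow> 'y) \<Rightarrow> 'z \<Rightarrow> 'x \<Rightarrow> 'y \<Rightarrow> bool" where
  "primal_optimal f1 f2 h1 h2 A B c x y \<longleftrightarrow>
     adjoint A x + adjoint B y = c \<and>
     (\<forall>x' y'. adjoint A x' + adjoint B y' = c \<longrightarrow>
        primal_obj f1 f2 h1 h2 x y \<le> primal_obj f1 f2 h1 h2 x' y')"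

definition dual_optimal ::
  "('x::euclidean_space \<Rightarrow> real) \<Rightarrow> ('x \<Rightarrow> ereal) \<Rightarrow> ('y::euclidean_space \<Rightarrow> real) \<Rightarrow> ('y \<Rightarrow> ereal)
   \<Rightarrow> ('z::euclidean_space \<Rightarrow> 'x) \<Rightarrow> ('z \<Rightarrow> 'y) \<Rightarrow> 'z \<Rightarrow> 'z \<Rightarrow> bool" where
  "dual_optimal f1 f2 h1 h2 A B c z \<longleftrightarrow>
     (\<forall>z'. dual_fun f1 f2 h1 h2 A B c z' \<le> dual_fun f1 f2 h1 h2 A B c z)"

end

theory Submission
  imports Defs
begin

text \<open>Testing the optimality conditions of the two subproblems against a KKT point, i.e. using
  monotonicity of \<open>\<partial>f\<^sub>2\<close> and \<open>\<partial>h\<^sub>2\<close> together with the two-sided quadratic bounds on \<open>f\<^sub>1\<close> and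
  \<open>h\<^sub>1\<close>, turns the relaxation identities into a decrease of the Lyapunov function \<open>\<Psi>\<close> up to
  correction terms; comparing two consecutive \<open>x\<close>-subproblems controls the residual
  \<open>A\<^sup>*x\<^sup>k\<^sup>+\<^sup>1 + B\<^sup>*y\<^sup>k - c\<close>, and a \<open>\<lambda>\<close>-weighted combination gives the descent inequality for \<open>E\<close>.

  For \<open>\<lambda> > 1/2\<close> and summable \<open>\<xi>\<close>, \<open>E\<close> is quasi-Fej\'er monotone, so it converges and \<open>\<delta>\<^sub>k \<rightarrow> 0\<close>:
  residuals, successive differences and relaxation gaps vanish and the iterates stay bounded.
  By closedness of \<open>f\<^sub>2\<close> and \<open>h\<^sub>2\<close> every cluster point is a KKT point; running the same argument
  at that point, its Lyapunov function is convergent and vanishes along the cluster subsequence,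
  so it tends to zero and the whole sequence converges. KKT points are saddle points of the
  Lagrangian, hence primal and dual optimal.\<close>

section \<open>Quadratic forms of self-adjoint operators\<close>

lemma psd_op_linear: "psd_op G \<Longrightarrow> linear G"
  by (simp add: psd_op_def)

lemma psd_op_sym: "psd_op G \<Longrightarrow> G u \<bullet> v = u \<bullet> G v"
  by (simp add: psd_op_def)

lemma qn_nonneg: "psd_op G \<Longrightarrow> 0 \<le> qn G u"
  by (simp add: psd_op_def qn_def)

lemma pd_op_psd_op: "pd_op G \<Longrightarrow> psd_op G"
  by (simp add: pd_op_def)

lemma qn_add:
  assumes "psd_op G"
  shows "qn G (u + v) = qn G u + 2 * (G u \<bullet> v) + qn G v"
proof -
  interpret linear G using psd_op_linear[OF assms] .
  have "u \<bullet> G v = G u \<bullet> v" "v \<bullet> G u = G u \<bullet> v"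
    using psd_op_sym[OF assms] by (simp_all add: inner_commute)
  then show ?thesis by (simp add: qn_def add inner_add_left inner_add_right)
qed

lemma qn_diff:
  assumes "psd_op G"
  shows "qn G (u - v) = qn G u - 2 * (G u \<bullet> v) + qn G v"
proof -
  interpret linear G using psd_op_linear[OF assms] .
  have "u \<bullet> G v = G u \<bullet> v" "v \<bullet> G u = G u \<bullet> v"
    using psd_op_sym[OF assms] by (simp_all add: inner_commute)
  then show ?thesis by (simp add: qn_def diff inner_diff_left inner_diff_right)
qed

lemma qn_scaleR: "linear G \<Longrightarrow> qn G (r *\<^sub>R u) = r\<^sup>2 * qn G u"
  by (simp add: qn_def linear_scale power2_eq_square)

lemma qn_minus_commute: "linear G \<Longrightarrow> qn G (u - v) = qn G (v - u)"
  by (simp add: qn_def linear_diff inner_diff_left inner_diff_right)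

lemma qn_opadd: "qn (opadd G K) u = qn G u + qn K u"
  by (simp add: qn_def opadd_def inner_add_right)

lemma psd_op_opadd: "psd_op G \<Longrightarrow> psd_op K \<Longrightarrow> psd_op (opadd G K)"
  unfolding psd_op_def opadd_def
  by (auto simp: linear_compose_add inner_add_left inner_add_right)

lemma qn_diff_le_sum:
  assumes "psd_op G"
  shows "(1/2) * qn G (u - v) \<le> qn G u + qn G v"
  using qn_nonneg[OF assms, of "u + v"] qn_add[OF assms, of u v] qn_diff[OF assms, of u v] by linarith

lemma qn_add_le_sum:
  assumes "psd_op G"
  shows "qn G (u + v) \<le> 2 * qn G u + 2 * qn G v"
  using qn_nonneg[OF assms, of "u - v"] qn_add[OF assms, of u v] qn_diff[OF assms, of u v] by linarith

lemma qn_relaxation_step: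
  assumes G: "psd_op G" and "\<rho> > 0"
  shows "(1/\<rho>) * qn G a - (1/\<rho>) * qn G (a + \<rho> *\<^sub>R d) = -2 * (G d \<bullet> (a + d)) + (2 - \<rho>) * qn G d"
proof -
  have expand: "qn G (a + \<rho> *\<^sub>R d) = qn G a + 2 * (G a \<bullet> (\<rho> *\<^sub>R d)) + \<rho>\<^sup>2 * qn G d"
    using qn_add[OF G] qn_scaleR[OF psd_op_linear[OF G]] by simp
  have sym: "G a \<bullet> d = G d \<bullet> a"
    using psd_op_sym[OF G, of a d] by (simp add: inner_commute)
  have split: "G d \<bullet> (a + d) = G d \<bullet> a + qn G d"
    by (simp add: qn_def inner_add_right inner_commute)
  show ?thesis unfolding expand split using \<open>\<rho> > 0\<close> by (simp add: sym field_simps power2_eq_square)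
qed

lemma tendsto_linear:
  fixes G :: "'a::euclidean_space \<Rightarrow> 'b::real_normed_vector"
  assumes "linear G" and "(f \<longlongrightarrow> l) F"
  shows "((\<lambda>k. G (f k)) \<longlongrightarrow> G l) F"
  using assms by (simp add: linear_conv_bounded_linear bounded_linear.tendsto)

lemma tendsto_qn:
  fixes G :: "'a::euclidean_space \<Rightarrow> 'a"
  assumes "linear G" and "(f \<longlongrightarrow> l) F"
  shows "((\<lambda>k. qn G (f k)) \<longlongrightarrow> qn G l) F"
  unfolding qn_def by (rule tendsto_inner[OF assms(2) tendsto_linear[OF assms]])

lemma pd_op_coercive:
  fixes G :: "'a::euclidean_space \<Rightarrow> 'a"
  assumes "pd_op G"
  obtains \<mu> where "\<mu> > 0" "\<And>u. \<mu> * (norm u)\<^sup>2 \<le> qn G u"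
proof -
  have lin: "linear G" using assms by (simp add: pd_op_def psd_op_def)
  have cont: "continuous_on (sphere 0 1) (qn G)"
    using lin unfolding qn_def[abs_def]
    by (intro continuous_intros) (simp add: linear_conv_bounded_linear linear_continuous_on)
  obtain u0 where u0: "u0 \<in> sphere 0 1" and min: "\<forall>v\<in>sphere 0 1. qn G u0 \<le> qn G v"
    using continuous_attains_inf[OF compact_sphere _ cont] by auto
  have "u0 \<noteq> 0" using u0 by auto
  then have pos: "qn G u0 > 0"
    using assms by (simp add: pd_op_def qn_def)
  have bound: "qn G u0 * (norm u)\<^sup>2 \<le> qn G u" for u
  proof (cases "u = 0")
    case True
    then show ?thesis by (simp add: qn_def linear_0[OF lin])
  next
    case False
    define v where "v = (1 / norm u) *\<^sub>R u"
    have "v \<in> sphere 0 1" using False by (simp add: v_def)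
    then have "qn G u0 \<le> qn G v" using min by blast
    then have "qn G u0 \<le> (1 / norm u)\<^sup>2 * qn G u"
      unfolding v_def qn_scaleR[OF lin] .
    then have "qn G u0 * (norm u)\<^sup>2 \<le> (1 / norm u)\<^sup>2 * qn G u * (norm u)\<^sup>2"
      by (simp add: mult_right_mono)
    also have "\<dots> = qn G u" using False by (simp add: field_simps)
    finally show ?thesis .
  qed
  show ?thesis by (rule that[OF pos bound])
qed

lemma tendsto_zero_if_qn_tendsto_zero:
  fixes G :: "'a::euclidean_space \<Rightarrow> 'a"
  assumes "pd_op G" and "((\<lambda>k. qn G (f k)) \<longlongrightarrow> 0) F"
  shows "(f \<longlongrightarrow> 0) F"
proof -
  obtain \<mu> where \<mu>: "\<mu> > 0" "\<And>u. \<mu> * (norm u)\<^sup>2 \<le> qn G u"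
    using pd_op_coercive[OF assms(1)] by blast
  have "((\<lambda>k. (norm (f k))\<^sup>2) \<longlongrightarrow> 0) F"
  proof (rule tendsto_sandwich[OF _ _ tendsto_const tendsto_divide_zero[OF assms(2)]])
    show "\<forall>\<^sub>F k in F. 0 \<le> (norm (f k))\<^sup>2" by simp
    show "\<forall>\<^sub>F k in F. (norm (f k))\<^sup>2 \<le> qn G (f k) / \<mu>"
      using \<mu> by (intro always_eventually allI) (simp add: field_simps mult.commute)
  qed
  then have "((\<lambda>k. sqrt ((norm (f k))\<^sup>2)) \<longlongrightarrow> sqrt 0) F"
    by (intro tendsto_intros)
  then show ?thesis by (simp add: tendsto_norm_zero_iff)
qed

lemma norm_le_sqrt_if_scaled_sq_le:
  fixes v :: "'a::real_normed_vector"
  assumes "\<mu> > 0" "\<mu> * (norm v)\<^sup>2 \<le> C"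
  shows "norm v \<le> sqrt (C / \<mu>)"
  by (rule real_le_rsqrt) (use assms in \<open>simp add: field_simps mult.commute\<close>)

lemma half_norm_diff_sq_le:
  fixes a b :: "'a::real_inner"
  shows "(1/2) * (norm (a - b))\<^sup>2 \<le> (norm a)\<^sup>2 + (norm b)\<^sup>2"
proof -
  have "(norm (a + b))\<^sup>2 = (norm a)\<^sup>2 + 2 * (a \<bullet> b) + (norm b)\<^sup>2"
    "(norm (a - b))\<^sup>2 = (norm a)\<^sup>2 - 2 * (a \<bullet> b) + (norm b)\<^sup>2"
    by (simp_all add: power2_norm_eq_inner inner_add_left inner_add_right inner_diff_left
        inner_diff_right inner_commute)
  then show ?thesis using zero_le_power2[of "norm (a + b)"] by linarith
qed

text \<open>With \<open>W = z k - zb\<close>, \<open>U0 = A\<^sup>* (x k - xb)\<close>, \<open>U = A\<^sup>* (x (k+1) - xb)\<close> and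
  \<open>V = B\<^sup>* (y k - yb)\<close>, \<open>W1\<close> is \<open>z (k+1) - zb\<close>; the identity computes the change of the first two
  summands of the Lyapunov function \<open>\<Psi>\<close>.\<close>
lemma multiplier_potential_identity:
  fixes W U0 U V :: "'a::real_inner"
  assumes s: "\<sigma> > 0" and r: "\<rho> > 0"
  defines "W1 \<equiv> W + (\<sigma> * (\<rho> - 1)) *\<^sub>R U0 + \<sigma> *\<^sub>R U + (\<sigma> * \<rho>) *\<^sub>R V"
  shows "(1 / (\<sigma> * \<rho>)) * (norm (W + (\<sigma> * (\<rho> - 1)) *\<^sub>R U0))\<^sup>2
       - (1 / (\<sigma> * \<rho>)) * (norm (W1 + (\<sigma> * (\<rho> - 1)) *\<^sub>R U))\<^sup>2
       + \<sigma> * (2 - \<rho>) * (norm U0)\<^sup>2 - \<sigma> * (2 - \<rho>) * (norm U)\<^sup>2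
     = - 2 * (W1 \<bullet> U) - 2 * ((W + \<sigma> *\<^sub>R (U0 + V)) \<bullet> V) + \<sigma> * (2 - \<rho>) * (norm (U0 + V))\<^sup>2"
proof -
  define P where "P = W + (\<sigma> * (\<rho> - 1)) *\<^sub>R U0"
  have W1P: "W1 + (\<sigma> * (\<rho> - 1)) *\<^sub>R U = P + (\<sigma> * \<rho>) *\<^sub>R (U + V)"
    by (simp add: W1_def P_def algebra_simps)
  have W1P': "W1 = P + \<sigma> *\<^sub>R U + (\<sigma> * \<rho>) *\<^sub>R V" by (simp add: W1_def P_def)
  have h2: "(\<sigma> * 2) *\<^sub>R U0 = \<sigma> *\<^sub>R U0 + \<sigma> *\<^sub>R U0" by (metis scaleR_add_left mult_2_right)
  have WP: "W + \<sigma> *\<^sub>R (U0 + V) = P + (\<sigma> * (2 - \<rho>)) *\<^sub>R U0 + \<sigma> *\<^sub>R V"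
    by (simp add: P_def algebra_simps h2)
  have e1: "(norm (P + (\<sigma> * \<rho>) *\<^sub>R (U + V)))\<^sup>2 = (norm P)\<^sup>2 + 2 * (\<sigma> * \<rho>) * (P \<bullet> U + P \<bullet> V)
        + (\<sigma> * \<rho>)\<^sup>2 * ((norm U)\<^sup>2 + 2 * (U \<bullet> V) + (norm V)\<^sup>2)"
    unfolding power2_norm_eq_inner
    by (simp add: inner_add_left inner_add_right inner_commute algebra_simps power2_eq_square)
  have e2: "(norm (U0 + V))\<^sup>2 = (norm U0)\<^sup>2 + 2 * (U0 \<bullet> V) + (norm V)\<^sup>2"
    by (simp add: power2_norm_eq_inner inner_add_left inner_add_right inner_commute)
  have e3: "W1 \<bullet> U = P \<bullet> U + \<sigma> * (norm U)\<^sup>2 + \<sigma> * \<rho> * (U \<bullet> V)"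
    by (simp add: W1P' inner_add_left inner_add_right power2_norm_eq_inner inner_commute)
  have e4: "(W + \<sigma> *\<^sub>R (U0 + V)) \<bullet> V = P \<bullet> V + \<sigma> * (2 - \<rho>) * (U0 \<bullet> V) + \<sigma> * (norm V)\<^sup>2"
    by (simp add: WP inner_add_left power2_norm_eq_inner)
  have "(1 / (\<sigma> * \<rho>)) * ((norm P)\<^sup>2 - (norm (P + (\<sigma> * \<rho>) *\<^sub>R (U + V)))\<^sup>2)
     = - 2 * (P \<bullet> U + P \<bullet> V) - (\<sigma> * \<rho>) * ((norm U)\<^sup>2 + 2 * (U \<bullet> V) + (norm V)\<^sup>2)"
    using s r unfolding e1 by (simp add: field_simps power2_eq_square)
  then show ?thesis
    unfolding W1P P_def[symmetric] e2 e3 e4 by (simp add: algebra_simps)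
qed

lemma le_if_le_plus_small:
  fixes a b Q :: real
  assumes "0 \<le> Q" and le: "\<And>t. 0 < t \<Longrightarrow> t \<le> 1 \<Longrightarrow> a \<le> b + t * Q"
  shows "a \<le> b"
proof (rule field_le_epsilon)
  fix e :: real assume "e > 0"
  define t where "t = min 1 (e / (Q + 1))"
  have t: "0 < t" "t \<le> 1" using \<open>e > 0\<close> \<open>0 \<le> Q\<close> by (auto simp: t_def)
  have "t * Q \<le> e / (Q + 1) * Q" using \<open>0 \<le> Q\<close> by (intro mult_right_mono) (simp_all add: t_def)
  also have "\<dots> \<le> e" using \<open>e > 0\<close> \<open>0 \<le> Q\<close> by (simp add: field_simps)
  finally show "a \<le> b + e" using le[OF t] by linarith
qed

lemma tendsto_zero_if_scaled_le:
  fixes g d :: "nat \<Rightarrow> real"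
  assumes "c > 0" "\<And>k. 0 \<le> g k" "\<And>k. c * g k \<le> d k" "d \<longlonglongrightarrow> 0"
  shows "g \<longlonglongrightarrow> 0"
proof (rule tendsto_sandwich[OF _ _ tendsto_const tendsto_divide_zero[OF assms(4)]])
  show "\<forall>\<^sub>F k in sequentially. 0 \<le> g k" using assms(2) by simp
  show "\<forall>\<^sub>F k in sequentially. g k \<le> d k / c"
    using assms(1,3) by (intro always_eventually allI) (simp add: field_simps mult.commute)
qed

lemma tendsto_zero_if_norm_sq_tendsto_zero:
  fixes f :: "nat \<Rightarrow> 'a::real_normed_vector"
  assumes "(\<lambda>k. (norm (f k))\<^sup>2) \<longlonglongrightarrow> 0"
  shows "f \<longlonglongrightarrow> 0"
proof -
  have "(\<lambda>k. sqrt ((norm (f k))\<^sup>2)) \<longlonglongrightarrow> sqrt 0" using assms by (intro tendsto_intros)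
  then show ?thesis by (simp add: tendsto_norm_zero_iff)
qed

lemma lipschitz_tendsto:
  fixes g :: "'a::real_normed_vector \<Rightarrow> 'b::real_normed_vector"
  assumes "\<exists>L. \<forall>u v. norm (g u - g v) \<le> L * norm (u - v)" and "f \<longlonglongrightarrow> l"
  shows "(\<lambda>k. g (f k)) \<longlonglongrightarrow> g l"
proof -
  obtain L where L: "\<And>u v. norm (g u - g v) \<le> L * norm (u - v)" using assms(1) by blast
  have "(\<lambda>k. L * norm (f k - l)) \<longlonglongrightarrow> L * 0"
    using assms(2) by (intro tendsto_mult_left tendsto_norm_zero LIM_zero)
  then have lim: "(\<lambda>k. L * norm (f k - l)) \<longlonglongrightarrow> 0" by simp
  have bound: "1 * norm (g (f k) - g l) \<le> L * norm (f k - l)" for k using L by simp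
  have "(\<lambda>k. norm (g (f k) - g l)) \<longlonglongrightarrow> 0"
    by (rule tendsto_zero_if_scaled_le[OF _ _ bound lim]) simp_all
  then show ?thesis by (rule LIM_zero_cancel[OF tendsto_norm_zero_cancel])
qed

lemma quasi_fejer_partial_sums:
  fixes a d e :: "nat \<Rightarrow> real"
  assumes step: "\<And>k. k \<ge> K \<Longrightarrow> a (Suc k) \<le> a k - d k + e k"
  shows "n \<ge> K \<Longrightarrow> a n + (\<Sum>j\<in>{K..<n}. d j) \<le> a K + (\<Sum>j\<in>{K..<n}. e j)"
proof (induction n)
  case (Suc n)
  show ?case
  proof (cases "Suc n = K")
    case False
    then have "n \<ge> K" using Suc.prems by simp
    then show ?thesis using Suc.IH step[of n] by (simp add: sum.atLeastLessThan_Suc)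
  qed simp
qed simp

lemma quasi_fejer:
  fixes a d e :: "nat \<Rightarrow> real"
  assumes step: "\<And>k. k \<ge> K \<Longrightarrow> a (Suc k) \<le> a k - d k + e k"
    and a0: "\<And>k. 0 \<le> a k" and d0: "\<And>k. 0 \<le> d k" and e0: "\<And>k. 0 \<le> e k" and se: "summable e"
  shows "\<forall>n\<ge>K. a n \<le> a K + suminf e" and "d \<longlonglongrightarrow> 0" and "convergent a"
proof -
  have sle: "(\<Sum>j\<in>{K..<n}. e j) \<le> suminf e" for n
    using sum_le_suminf[OF se, of "{K..<n}"] e0 by auto
  show "\<forall>n\<ge>K. a n \<le> a K + suminf e"
  proof (intro allI impI)
    fix n assume "K \<le> n"
    have "0 \<le> (\<Sum>j\<in>{K..<n}. d j)" using d0 by (simp add: sum_nonneg)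
    then show "a n \<le> a K + suminf e" using quasi_fejer_partial_sums[where a=a and d=d and e=e, OF step \<open>K \<le> n\<close>] sle[of n] by linarith
  qed
  have "summable (\<lambda>j. d (j + K))"
  proof (rule summableI_nonneg_bounded[where x = "a K + suminf e"])
    fix n
    have "(\<Sum>i<n. d (i + K)) = (\<Sum>j\<in>{K..<n + K}. d j)"
      using sum.shift_bounds_nat_ivl[of d 0 K n] by (simp add: lessThan_atLeast0 add.commute)
    moreover have "K \<le> n + K" by simp
    ultimately show "(\<Sum>i<n. d (i + K)) \<le> a K + suminf e"
      using quasi_fejer_partial_sums[where a=a and d=d and e=e, OF step] sle[of "n + K"] a0[of "n + K"]
      by fastforce
  qed (rule d0)
  then show "d \<longlonglongrightarrow> 0" by (rule LIMSEQ_offset[OF summable_LIMSEQ_zero])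
  define T where "T n = suminf e - (\<Sum>j<n. e j)" for n
  have T0: "T n \<ge> 0" for n using sum_le_suminf[OF se, of "{..<n}"] e0 by (auto simp: T_def)
  have "T \<longlonglongrightarrow> suminf e - suminf e"
    unfolding T_def[abs_def] by (intro tendsto_intros summable_LIMSEQ[OF se])
  then have Tlim: "T \<longlonglongrightarrow> 0" by simp
  define C where "C n = a (n + K) + T (n + K)" for n
  have "decseq C"
  proof (rule decseq_SucI)
    fix n
    have "T (Suc (n + K)) = T (n + K) - e (n + K)" by (simp add: T_def)
    then show "C (Suc n) \<le> C n" using step[of "n + K"] d0[of "n + K"] by (simp add: C_def)
  qed
  moreover have "\<forall>i. 0 \<le> C i" using a0 T0 by (simp add: C_def)
  ultimately obtain L where "C \<longlonglongrightarrow> L" using decseq_convergent by blast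
  then have "(\<lambda>n. C n - T (n + K)) \<longlonglongrightarrow> L - 0"
    by (intro tendsto_intros LIMSEQ_ignore_initial_segment[OF Tlim])
  then have "(\<lambda>n. a (n + K)) \<longlonglongrightarrow> L" by (simp add: C_def)
  then show "convergent a" by (auto simp: convergent_def dest: LIMSEQ_offset)
qed

lemma perturbed_contraction_tendsto_zero:
  fixes a b :: "nat \<Rightarrow> real"
  assumes rec: "\<And>k. a (Suc k) \<le> q * a k + b k" and q: "0 \<le> q" "q < 1"
    and a0: "\<And>k. 0 \<le> a k" and b: "b \<longlonglongrightarrow> 0"
  shows "a \<longlonglongrightarrow> 0"
proof (rule LIMSEQ_I)
  fix r :: real assume r: "r > 0"
  define \<epsilon> where "\<epsilon> = r * (1 - q) / 2"
  have eps: "\<epsilon> > 0" "\<epsilon> / (1 - q) = r / 2"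
    using r q by (simp_all add: \<epsilon>_def nonzero_divide_eq_eq)
  obtain N where N: "\<And>k. k \<ge> N \<Longrightarrow> norm (b k) < \<epsilon>" using LIMSEQ_D[OF b eps(1)] by auto
  have geometric: "a (N + m) \<le> q ^ m * a N + \<epsilon> / (1 - q)" for m
  proof (induction m)
    case (Suc m)
    have "a (N + Suc m) \<le> q * (q ^ m * a N + \<epsilon> / (1 - q)) + \<epsilon>"
      using rec[of "N + m"] mult_left_mono[OF Suc.IH q(1)] N[of "N + m"] by simp
    also have "\<dots> = q ^ Suc m * a N + \<epsilon> / (1 - q)" using q by (simp add: field_simps)
    finally show ?case .
  qed (use eps q in simp)
  have "(\<lambda>m. q ^ m * a N) \<longlonglongrightarrow> 0 * a N" using q by (intro tendsto_intros) simp
  then obtain M where M: "\<And>m. m \<ge> M \<Longrightarrow> norm (q ^ m * a N) < r / 2"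
    using LIMSEQ_D[of _ 0 "r/2"] r by fastforce
  show "\<exists>no. \<forall>n\<ge>no. norm (a n - 0) < r"
  proof (intro exI allI impI)
    fix n assume "n \<ge> N + M"
    then have "a n \<le> q ^ (n - N) * a N + r / 2"
      using geometric[of "n - N"] eps(2) by simp
    moreover have "\<bar>q ^ (n - N) * a N\<bar> < r / 2"
      using M[of "n - N"] \<open>n \<ge> N + M\<close> by simp
    ultimately show "norm (a n - 0) < r"
      using a0[of n] abs_ge_self[of "q ^ (n - N) * a N"] by simp
  qed
qed

section \<open>Closed proper convex extended-real functions\<close>

lemma proper_fun_finite:
  assumes "proper_fun f" and "f x \<noteq> \<infinity>"
  obtains a where "f x = ereal a"
  using assms by (cases "f x") (auto simp: proper_fun_def)

lemma convex_fun_le_convex_combination: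
  assumes "convex_fun f" and "f x = ereal a" and "f u = ereal b" and "0 \<le> t" "t \<le> 1"
  shows "f (x + t *\<^sub>R (u - x)) \<le> ereal ((1 - t) * a + t * b)"
proof -
  let ?epi = "{(x, t::real). f x \<le> ereal t}"
  have "(x, a) \<in> ?epi" "(u, b) \<in> ?epi" using assms(2,3) by auto
  then have "(1 - t) *\<^sub>R (x, a) + t *\<^sub>R (u, b) \<in> ?epi"
    using assms(1,4,5) unfolding convex_fun_def convex_def by auto
  moreover have "(1 - t) *\<^sub>R (x, a) + t *\<^sub>R (u, b) = (x + t *\<^sub>R (u - x), (1 - t) * a + t * b)"
    by (simp add: algebra_simps)
  ultimately show ?thesis by simp
qed

lemma quadratic_along_line:
  assumes G: "psd_op G"
  shows "(1/2) * ((x + t *\<^sub>R d) \<bullet> G (x + t *\<^sub>R d)) + g \<bullet> (x + t *\<^sub>R d)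
    = (1/2) * (x \<bullet> G x) + g \<bullet> x + t * ((G x + g) \<bullet> d) + t\<^sup>2 / 2 * (d \<bullet> G d)"
proof -
  interpret linear G using psd_op_linear[OF G] .
  have "x \<bullet> G d = G x \<bullet> d" using psd_op_sym[OF G, of x d] by simp
  then have "(x + t *\<^sub>R d) \<bullet> G (x + t *\<^sub>R d) = x \<bullet> G x + 2 * t * (G x \<bullet> d) + t\<^sup>2 * (d \<bullet> G d)"
    by (simp add: add scale inner_add_left inner_add_right inner_commute[of d "G x"]
        power2_eq_square algebra_simps)
  then show ?thesis by (simp add: inner_add_left inner_add_right algebra_simps)
qed

text \<open>First-order optimality condition for minimising \<open>f + \<frac>1\<over>2\<parallel>\<cdot>\<parallel>\<^sub>G\<^sup>2 + \<langle>g,\<cdot>\<rangle>\<close>: comparing the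
  minimiser \<open>x\<close> with \<open>x + t (u - x)\<close> and letting \<open>t \<rightarrow> 0\<close> shows that \<open>-(G x + g)\<close> is a subgradient.\<close>
lemma subgradient_at_quadratic_minimizer:
  assumes cf: "convex_fun f" and pf: "proper_fun f" and G: "psd_op G"
    and min: "\<And>u. f x + ereal ((1/2) * (x \<bullet> G x) + g \<bullet> x) \<le> f u + ereal ((1/2) * (u \<bullet> G u) + g \<bullet> u)"
  shows "f x \<noteq> \<infinity> \<and> (\<forall>u. f x + ereal ((- (G x + g)) \<bullet> (u - x)) \<le> f u)"
proof -
  obtain u0 where "f u0 < \<infinity>" using pf by (auto simp: proper_fun_def)
  then have finx: "f x \<noteq> \<infinity>" using min[of u0] by auto
  then obtain a where fa: "f x = ereal a" by (rule proper_fun_finite[OF pf])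
  have "f x + ereal ((- (G x + g)) \<bullet> (u - x)) \<le> f u" for u
  proof (cases "f u = \<infinity>")
    case False
    then obtain b where fb: "f u = ereal b" by (rule proper_fun_finite[OF pf])
    define d where "d = u - x"
    define c where "c = (G x + g) \<bullet> d"
    define Q where "Q = d \<bullet> G d"
    have Q0: "Q \<ge> 0" using qn_nonneg[OF G, of d] by (simp add: Q_def qn_def)
    have approx: "a \<le> b + c + t / 2 * Q" if t: "0 < t" "t \<le> 1" for t
    proof -
      define p where "p = x + t *\<^sub>R d"
      have fp: "f p \<le> ereal ((1 - t) * a + t * b)"
        using convex_fun_le_convex_combination[OF cf fa fb, of t] t by (simp add: p_def d_def)
      have quad: "(1/2) * (p \<bullet> G p) + g \<bullet> p = (1/2) * (x \<bullet> G x) + g \<bullet> x + t * c + t\<^sup>2 / 2 * Q"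
        unfolding p_def c_def Q_def by (rule quadratic_along_line[OF G])
      have "f x + ereal ((1/2) * (x \<bullet> G x) + g \<bullet> x)
          \<le> ereal ((1 - t) * a + t * b) + ereal ((1/2) * (p \<bullet> G p) + g \<bullet> p)"
        using min[of p] fp by (meson add_right_mono order_trans)
      then have "ereal (a + ((1/2) * (x \<bullet> G x) + g \<bullet> x))
          \<le> ereal ((1 - t) * a + t * b + ((1/2) * (x \<bullet> G x) + g \<bullet> x + t * c + t\<^sup>2 / 2 * Q))"
        using fa quad by simp
      then have "t * a \<le> t * (b + c + t / 2 * Q)" by (simp add: algebra_simps power2_eq_square)
      then show ?thesis using t by simp
    qed
    have "a \<le> b + c"
      by (rule le_if_le_plus_small[of "Q / 2"]) (use Q0 approx in auto)
    moreover have "(- (G x + g)) \<bullet> (u - x) = - c" by (simp only: inner_minus_left c_def d_def)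
    ultimately show ?thesis using fa fb by simp
  qed simp
  with finx show ?thesis by blast
qed

lemma subgradient_monotone:
  assumes pf: "proper_fun f"
    and p: "f p \<noteq> \<infinity>" "\<And>u. f p + ereal (s \<bullet> (u - p)) \<le> f u"
    and q: "f q \<noteq> \<infinity>" "\<And>u. f q + ereal (t \<bullet> (u - q)) \<le> f u"
  shows "(s - t) \<bullet> (p - q) \<ge> 0"
proof -
  obtain a where a: "f p = ereal a" using p(1) by (rule proper_fun_finite[OF pf])
  obtain b where b: "f q = ereal b" using q(1) by (rule proper_fun_finite[OF pf])
  have "a + s \<bullet> (q - p) \<le> b" "b + t \<bullet> (p - q) \<le> a"
    using p(2)[of q] q(2)[of p] a b by simp_all
  moreover have "(s - t) \<bullet> (p - q) = - (s \<bullet> (q - p)) - t \<bullet> (p - q)"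
    by (simp add: inner_diff_left inner_diff_right)
  ultimately show ?thesis by simp
qed

lemma closed_fun_limit_le:
  assumes cl: "closed_fun f" and pf: "proper_fun f"
    and p: "p \<longlonglongrightarrow> p0" and a: "a \<longlonglongrightarrow> a0" and b: "b \<longlonglongrightarrow> b0"
    and le: "\<And>j. f (p j) + ereal (a j) \<le> f u + ereal (b j)"
  shows "f p0 + ereal a0 \<le> f u + ereal b0"
proof (cases "f u = \<infinity>")
  case False
  then obtain m where m: "f u = ereal m" by (rule proper_fun_finite[OF pf])
  let ?epi = "{(x, t::real). f x \<le> ereal t}"
  have "(p j, m + b j - a j) \<in> ?epi" for j
  proof -
    have le': "f (p j) + ereal (a j) \<le> ereal (m + b j)" using le[of j] m by simp
    then have "f (p j) \<noteq> \<infinity>" by auto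
    then obtain v where "f (p j) = ereal v" by (rule proper_fun_finite[OF pf])
    with le' show ?thesis by simp
  qed
  moreover have "(\<lambda>j. (p j, m + b j - a j)) \<longlonglongrightarrow> (p0, m + b0 - a0)"
    by (intro tendsto_intros p a b)
  ultimately have "(p0, m + b0 - a0) \<in> ?epi"
    by (rule closed_sequentially[OF cl[unfolded closed_fun_def]])
  moreover have "f p0 \<noteq> -\<infinity>" using pf by (simp add: proper_fun_def)
  ultimately obtain v where "f p0 = ereal v" "v \<le> m + b0 - a0" by (cases "f p0") auto
  then show ?thesis using m by simp
qed simp

lemma limit_of_quadratic_minimizers:
  assumes cl: "closed_fun f" and pf: "proper_fun f" and cf: "convex_fun f" and G: "psd_op G"
    and p: "p \<longlonglongrightarrow> p0" and g: "g \<longlonglongrightarrow> g0"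
    and min: "\<And>j u. f (p j) + ereal ((1/2) * (p j \<bullet> G (p j)) + g j \<bullet> p j)
                     \<le> f u + ereal ((1/2) * (u \<bullet> G u) + g j \<bullet> u)"
  shows "f p0 \<noteq> \<infinity> \<and> (\<forall>u. f p0 + ereal ((- (G p0 + g0)) \<bullet> (u - p0)) \<le> f u)"
proof (rule subgradient_at_quadratic_minimizer[OF cf pf G])
  have lin: "linear G" using psd_op_linear[OF G] .
  fix u
  show "f p0 + ereal ((1/2) * (p0 \<bullet> G p0) + g0 \<bullet> p0) \<le> f u + ereal ((1/2) * (u \<bullet> G u) + g0 \<bullet> u)"
  proof (rule closed_fun_limit_le[OF cl pf p _ _ min])
    show "(\<lambda>j. (1/2) * (p j \<bullet> G (p j)) + g j \<bullet> p j) \<longlonglongrightarrow> (1/2) * (p0 \<bullet> G p0) + g0 \<bullet> p0"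
      by (intro tendsto_intros p g tendsto_linear[OF lin])
    show "(\<lambda>j. (1/2) * (u \<bullet> G u) + g j \<bullet> u) \<longlonglongrightarrow> (1/2) * (u \<bullet> G u) + g0 \<bullet> u"
      by (intro tendsto_intros g)
  qed
qed

lemma gradient_three_point_bound:
  assumes bnd: "\<And>u u'. (1/2) * qn L (u - u') \<le> f u - f u' - (u - u') \<bullet> g u'
                        \<and> f u - f u' - (u - u') \<bullet> g u' \<le> (1/2) * qn H (u - u')"
    and L: "psd_op L"
  shows "(g v - g w) \<bullet> (p - w) \<ge> (1/4) * qn L (p - v) - (1/2) * qn H (p - v)"
proof -
  have "f p - f v - (p - v) \<bullet> g v \<le> (1/2) * qn H (p - v)"
    "(1/2) * qn L (w - v) \<le> f w - f v - (w - v) \<bullet> g v"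
    "(1/2) * qn L (p - w) \<le> f p - f w - (p - w) \<bullet> g w"
    using bnd by blast+
  moreover have "(1/2) * qn L ((p - w) - (v - w)) \<le> qn L (p - w) + qn L (v - w)"
    by (rule qn_diff_le_sum[OF L])
  moreover have "qn L (w - v) = qn L (v - w)"
    using qn_minus_commute[OF psd_op_linear[OF L]] by blast
  moreover have "(g v - g w) \<bullet> (p - w) = (p - v) \<bullet> g v - (w - v) \<bullet> g v - (p - w) \<bullet> g w"
    by (simp add: inner_diff_left inner_diff_right inner_commute)
  ultimately show ?thesis by simp
qed

lemma gradient_increment_bound:
  assumes bnd: "\<And>u u'. (1/2) * qn L (u - u') \<le> f u - f u' - (u - u') \<bullet> g u'
                        \<and> f u - f u' - (u - u') \<bullet> g u' \<le> (1/2) * qn H (u - u')"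
    and L: "psd_op L" and H: "psd_op H"
  shows "(g p - g q) \<bullet> d \<ge> - (1/4) * qn H (p - q - d)"
proof -
  define h where "h = (1/2) *\<^sub>R (p - q - d)"
  have "0 \<le> f (p - h) - f q - ((p - h) - q) \<bullet> g q"
    "0 \<le> f (q + h) - f p - ((q + h) - p) \<bullet> g p"
    using bnd[of "p - h" q] bnd[of "q + h" p] qn_nonneg[OF L, of "p - h - q"] qn_nonneg[OF L, of "q + h - p"]
    by linarith+
  moreover have "f (p - h) - f p - ((p - h) - p) \<bullet> g p \<le> (1/2) * qn H ((p - h) - p)"
    "f (q + h) - f q - ((q + h) - q) \<bullet> g q \<le> (1/2) * qn H ((q + h) - q)"
    using bnd by blast+
  moreover have "qn H ((p - h) - p) = qn H h"
    using qn_minus_commute[OF psd_op_linear[OF H], of "p - h" p] by simp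
  moreover have "qn H h = (1/4) * qn H (p - q - d)"
    unfolding h_def using qn_scaleR[OF psd_op_linear[OF H]] by (simp add: power2_eq_square)
  moreover have "((p - h) - q) \<bullet> g q - ((p - h) - p) \<bullet> g p + ((q + h) - p) \<bullet> g p - ((q + h) - q) \<bullet> g q
      = - ((g p - g q) \<bullet> d)"
    unfolding h_def by (simp add: inner_diff_left inner_diff_right inner_add_left inner_commute algebra_simps)
  ultimately show ?thesis by simp
qed

section \<open>KKT points\<close>

lemma WstarD:
  assumes "(xb, yb, zb) \<in> Wstar gf1 f2 gh1 h2 A B c"
  shows "adjoint A xb + adjoint B yb = c"
    and "f2 xb \<noteq> \<infinity>" "\<And>u. f2 xb + ereal ((- (gf1 xb + A zb)) \<bullet> (u - xb)) \<le> f2 u"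
    and "h2 yb \<noteq> \<infinity>" "\<And>v. h2 yb + ereal ((- (gh1 yb + B zb)) \<bullet> (v - yb)) \<le> h2 v"
proof -
  from assms obtain gx gy where gx: "gx \<in> subdiff f2 xb" "gx + gf1 xb + A zb = 0"
    and gy: "gy \<in> subdiff h2 yb" "gy + gh1 yb + B zb = 0"
    and "adjoint A xb + adjoint B yb = c"
    by (auto simp: Wstar_def)
  then show "adjoint A xb + adjoint B yb = c" by simp
  have "gx = - (gf1 xb + A zb)" using gx(2) by (subst eq_neg_iff_add_eq_0) (simp add: add.assoc)
  moreover have "gy = - (gh1 yb + B zb)" using gy(2) by (subst eq_neg_iff_add_eq_0) (simp add: add.assoc)
  ultimately
  show "f2 xb \<noteq> \<infinity>" "\<And>u. f2 xb + ereal ((- (gf1 xb + A zb)) \<bullet> (u - xb)) \<le> f2 u"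
    "h2 yb \<noteq> \<infinity>" "\<And>v. h2 yb + ereal ((- (gh1 yb + B zb)) \<bullet> (v - yb)) \<le> h2 v"
    using gx(1) gy(1) by (auto simp: subdiff_def)
qed

lemma WstarI:
  assumes "f2 x \<noteq> \<infinity> \<and> (\<forall>u. f2 x + ereal ((- (gf1 x + A z)) \<bullet> (u - x)) \<le> f2 u)"
    and "h2 y \<noteq> \<infinity> \<and> (\<forall>v. h2 y + ereal ((- (gh1 y + B z)) \<bullet> (v - y)) \<le> h2 v)"
    and "adjoint A x + adjoint B y = c"
  shows "(x, y, z) \<in> Wstar gf1 f2 gh1 h2 A B c"
  using assms unfolding Wstar_def subdiff_def
  by (auto intro!: bexI[of _ "- (gf1 x + A z)"] bexI[of _ "- (gh1 y + B z)"])

lemma Wstar_lagrangian_le: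
  assumes kkt: "(xb, yb, zb) \<in> Wstar gf1 f2 gh1 h2 A B c"
    and linA: "linear A" and linB: "linear B" and pf: "proper_fun f2" and ph: "proper_fun h2"
    and f1: "\<And>u u'. f1 u' + (u - u') \<bullet> gf1 u' \<le> f1 u"
    and h1: "\<And>v v'. h1 v' + (v - v') \<bullet> gh1 v' \<le> h1 v"
  shows "lagrangian f1 f2 h1 h2 A B c xb yb zb \<le> lagrangian f1 f2 h1 h2 A B c u v zb"
proof -
  note kf = WstarD[OF kkt]
  obtain a where a: "f2 xb = ereal a" using kf(2) by (rule proper_fun_finite[OF pf])
  obtain b where b: "h2 yb = ereal b" using kf(4) by (rule proper_fun_finite[OF ph])
  have L0: "lagrangian f1 f2 h1 h2 A B c xb yb zb = ereal (f1 xb + a + h1 yb + b)"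
    using kf(1) a b by (simp add: lagrangian_def primal_obj_def)
  show ?thesis
  proof (cases "f2 u = \<infinity> \<or> h2 v = \<infinity>")
    case True
    moreover have "f2 u \<noteq> -\<infinity>" "h2 v \<noteq> -\<infinity>" using pf ph by (auto simp: proper_fun_def)
    ultimately show ?thesis by (auto simp: lagrangian_def primal_obj_def)
  next
    case False
    then obtain p q where p: "f2 u = ereal p" and q: "h2 v = ereal q"
      using proper_fun_finite[OF pf] proper_fun_finite[OF ph] by metis
    have adjA: "A w \<bullet> d = w \<bullet> adjoint A d" and adjB: "B w \<bullet> d' = w \<bullet> adjoint B d'" for w d d'
      using adjoint_clauses(2)[OF linA] adjoint_clauses(2)[OF linB] by (simp_all add: inner_commute)
    have "adjoint A (u - xb) + adjoint B (v - yb) = adjoint A u + adjoint B v - c"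
      using kf(1) by (simp add: linear_diff[OF adjoint_linear[OF linA]]
          linear_diff[OF adjoint_linear[OF linB]] algebra_simps)
    then have "zb \<bullet> (adjoint A u + adjoint B v - c) = zb \<bullet> adjoint A (u - xb) + zb \<bullet> adjoint B (v - yb)"
      by (metis inner_add_right)
    then have lin: "(- (gf1 xb + A zb)) \<bullet> (u - xb) + (u - xb) \<bullet> gf1 xb
        + (- (gh1 yb + B zb)) \<bullet> (v - yb) + (v - yb) \<bullet> gh1 yb
        + zb \<bullet> (adjoint A u + adjoint B v - c) = 0"
      unfolding inner_minus_left inner_add_left adjA adjB by (simp add: inner_commute)
    have s: "a + (- (gf1 xb + A zb)) \<bullet> (u - xb) \<le> p" "b + (- (gh1 yb + B zb)) \<bullet> (v - yb) \<le> q"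
      using kf(3)[of u] kf(5)[of v] a b p q by simp_all
    have "f1 xb + a + h1 yb + b \<le> f1 u + p + h1 v + q + zb \<bullet> (adjoint A u + adjoint B v - c)"
      using s f1[of xb u] h1[of yb v] lin by linarith
    then show ?thesis using L0 p q by (simp add: lagrangian_def primal_obj_def)
  qed
qed

text \<open>A KKT point is a saddle point of the Lagrangian, hence primal and dual optimal.\<close>
lemma Wstar_optimal:
  assumes kkt: "(xb, yb, zb) \<in> Wstar gf1 f2 gh1 h2 A B c"
    and "linear A" "linear B" "proper_fun f2" "proper_fun h2"
    and "\<And>u u'. f1 u' + (u - u') \<bullet> gf1 u' \<le> f1 u"
    and "\<And>v v'. h1 v' + (v - v') \<bullet> gh1 v' \<le> h1 v"
  shows "primal_optimal f1 f2 h1 h2 A B c xb yb \<and> dual_optimal f1 f2 h1 h2 A B c zb"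
proof
  let ?L = "lagrangian f1 f2 h1 h2 A B c"
  note saddle = Wstar_lagrangian_le[OF assms]
  have feasible: "adjoint A xb + adjoint B yb = c" by (rule WstarD(1)[OF kkt])
  then have L_feasible: "?L xb yb z = primal_obj f1 f2 h1 h2 xb yb" for z
    by (simp add: lagrangian_def)
  show "primal_optimal f1 f2 h1 h2 A B c xb yb"
    unfolding primal_optimal_def
  proof (intro conjI allI impI feasible)
    fix u v assume "adjoint A u + adjoint B v = c"
    then show "primal_obj f1 f2 h1 h2 xb yb \<le> primal_obj f1 f2 h1 h2 u v"
      using saddle[of u v] L_feasible[of zb] by (simp add: lagrangian_def)
  qed
  have "dual_fun f1 f2 h1 h2 A B c z \<le> dual_fun f1 f2 h1 h2 A B c zb" for z
  proof -
    have "dual_fun f1 f2 h1 h2 A B c z \<le> ?L xb yb z"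
      unfolding dual_fun_def by (rule INF_lower2[of "(xb, yb)"]) auto
    also have "\<dots> = ?L xb yb zb" by (simp add: L_feasible)
    also have "\<dots> \<le> dual_fun f1 f2 h1 h2 A B c zb"
      unfolding dual_fun_def by (rule INF_greatest) (use saddle in auto)
    finally show ?thesis .
  qed
  then show "dual_optimal f1 f2 h1 h2 A B c zb" by (simp add: dual_optimal_def)
qed

section \<open>The generalized ADMM with majorization\<close>

text \<open>\<open>xt\<close>, \<open>yt\<close>, \<open>zt\<close> are the relaxed points \<open>x\<^sup>~\<^sup>k\<close>, \<open>y\<^sup>~\<^sup>k\<close>, \<open>z\<^sup>~\<^sup>k\<close>; the subproblems are given by the
  minimising property of \<open>x k\<close> and \<open>y k\<close>, and \<open>At\<close>, \<open>Bt\<close>, \<open>F\<close>, \<open>H\<close> are parameters pinned down by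
  the first four assumptions.\<close>

locale gadmm =
  fixes f1 :: "'x::euclidean_space \<Rightarrow> real" and gf1 :: "'x \<Rightarrow> 'x"
    and f2 :: "'x \<Rightarrow> ereal"
    and h1 :: "'y::euclidean_space \<Rightarrow> real" and gh1 :: "'y \<Rightarrow> 'y"
    and h2 :: "'y \<Rightarrow> ereal"
    and A :: "'z::euclidean_space \<Rightarrow> 'x" and B :: "'z \<Rightarrow> 'y" and c :: 'z
    and SF SFh S :: "'x \<Rightarrow> 'x" and SH SHh T :: "'y \<Rightarrow> 'y"
    and \<sigma> \<rho> :: real
    and x xt :: "nat \<Rightarrow> 'x" and y yt :: "nat \<Rightarrow> 'y" and z zt :: "nat \<Rightarrow> 'z"
    and At :: "'x \<Rightarrow> 'z" and Bt :: "'y \<Rightarrow> 'z" and F :: "'x \<Rightarrow> 'x" and H :: "'y \<Rightarrow> 'y"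
  assumes At_def: "At = adjoint A" and Bt_def: "Bt = adjoint B"
  and F_def: "F = (\<lambda>u. SFh u + S u + \<sigma> *\<^sub>R A (At u))"
  and H_def: "H = (\<lambda>v. SHh v + T v + \<sigma> *\<^sub>R B (Bt v))"
  and linA: "linear A" and linB: "linear B"
  and f1_lip: "\<exists>L. \<forall>u v. norm (gf1 u - gf1 v) \<le> L * norm (u - v)"
  and h1_lip: "\<exists>L. \<forall>u v. norm (gh1 u - gh1 v) \<le> L * norm (u - v)"
  and SF_psd: "psd_op SF" and SFh_psd: "psd_op SFh"
  and SH_psd: "psd_op SH" and SHh_psd: "psd_op SHh"
  and f1_bounds: "\<And>u u'. (1/2) * qn SF (u - u') \<le> f1 u - f1 u' - (u - u') \<bullet> gf1 u'
                        \<and> f1 u - f1 u' - (u - u') \<bullet> gf1 u' \<le> (1/2) * qn SFh (u - u')"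
  and h1_bounds: "\<And>v v'. (1/2) * qn SH (v - v') \<le> h1 v - h1 v' - (v - v') \<bullet> gh1 v'
                        \<and> h1 v - h1 v' - (v - v') \<bullet> gh1 v' \<le> (1/2) * qn SHh (v - v')"
  and f2_cpc: "closed_fun f2 \<and> proper_fun f2 \<and> convex_fun f2"
  and h2_cpc: "closed_fun h2 \<and> proper_fun h2 \<and> convex_fun h2"
  and sigma_pos: "\<sigma> > 0" and rho: "0 < \<rho>" "\<rho> < 2"
  and S_psd: "psd_op S" and T_psd: "psd_op T"
  and F_pd: "pd_op F" and H_pd: "pd_op H"
  and x_step: "\<And>k u. f2 (x k) + ereal ((1/2) * (x k \<bullet> F (x k))
              + (gf1 (xt k) + \<sigma> *\<^sub>R A (At (xt k) + Bt (yt k) - c + (1 / \<sigma>) *\<^sub>R zt k) - F (xt k)) \<bullet> x k)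
           \<le> f2 u + ereal ((1/2) * (u \<bullet> F u)
              + (gf1 (xt k) + \<sigma> *\<^sub>R A (At (xt k) + Bt (yt k) - c + (1 / \<sigma>) *\<^sub>R zt k) - F (xt k)) \<bullet> u)"
  and z_step: "\<And>k. z k = zt k + \<sigma> *\<^sub>R (At (x k) + Bt (yt k) - c)"
  and y_step: "\<And>k v. h2 (y k) + ereal ((1/2) * (y k \<bullet> H (y k))
              + (gh1 (yt k) + \<sigma> *\<^sub>R B (At (x k) + Bt (yt k) - c + (1 / \<sigma>) *\<^sub>R z k) - H (yt k)) \<bullet> y k)
           \<le> h2 v + ereal ((1/2) * (v \<bullet> H v)
              + (gh1 (yt k) + \<sigma> *\<^sub>R B (At (x k) + Bt (yt k) - c + (1 / \<sigma>) *\<^sub>R z k) - H (yt k)) \<bullet> v)"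
  and relax_x: "\<And>k. xt (Suc k) = xt k + \<rho> *\<^sub>R (x k - xt k)"
  and relax_y: "\<And>k. yt (Suc k) = yt k + \<rho> *\<^sub>R (y k - yt k)"
  and relax_z: "\<And>k. zt (Suc k) = zt k + \<rho> *\<^sub>R (z k - zt k)"
begin

definition "Sx = opadd SFh S"
definition "Sy = opadd SHh T"

text \<open>The subgradients of \<open>f\<^sub>2\<close> at \<open>x\<^sup>k\<close> and of \<open>h\<^sub>2\<close> at \<open>y\<^sup>k\<close> certified by the two subproblems.\<close>
definition "x_subgrad k = - (gf1 (xt k) + A (z k) + Sx (x k - xt k))"
definition "y_subgrad k = - (gh1 (yt k) + B (z k + \<sigma> *\<^sub>R (At (x k) + Bt (y k) - c)) + Sy (y k - yt k))"

lemma linAt: "linear At" unfolding At_def by (rule adjoint_linear[OF linA])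
lemma linBt: "linear Bt" unfolding Bt_def by (rule adjoint_linear[OF linB])

lemma adjA: "A w \<bullet> u = w \<bullet> At u"
  unfolding At_def using adjoint_clauses(2)[OF linA] by (simp add: inner_commute)
lemma adjB: "B w \<bullet> u = w \<bullet> Bt u"
  unfolding Bt_def using adjoint_clauses(2)[OF linB] by (simp add: inner_commute)

lemma Sx_psd: "psd_op Sx" unfolding Sx_def by (rule psd_op_opadd[OF SFh_psd S_psd])
lemma Sy_psd: "psd_op Sy" unfolding Sy_def by (rule psd_op_opadd[OF SHh_psd T_psd])
lemma linSx: "linear Sx" by (rule psd_op_linear[OF Sx_psd])
lemma linSy: "linear Sy" by (rule psd_op_linear[OF Sy_psd])
lemma F_psd: "psd_op F" by (rule pd_op_psd_op[OF F_pd])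
lemma H_psd: "psd_op H" by (rule pd_op_psd_op[OF H_pd])
lemma linF: "linear F" by (rule psd_op_linear[OF F_psd])
lemma linH: "linear H" by (rule psd_op_linear[OF H_psd])
lemma f2_props: "closed_fun f2" "proper_fun f2" "convex_fun f2" using f2_cpc by auto
lemma h2_props: "closed_fun h2" "proper_fun h2" "convex_fun h2" using h2_cpc by auto

lemma F_eq: "F u = Sx u + \<sigma> *\<^sub>R A (At u)" by (simp add: F_def Sx_def opadd_def)
lemma H_eq: "H v = Sy v + \<sigma> *\<^sub>R B (Bt v)" by (simp add: H_def Sy_def opadd_def)

lemma qn_F: "qn F u = qn Sx u + \<sigma> * (norm (At u))\<^sup>2"
  by (simp add: qn_def F_eq inner_add_right adjA[symmetric] power2_norm_eq_inner inner_commute)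

lemma qn_SFh_le_Sx: "qn SFh u \<le> qn Sx u"
  using qn_nonneg[OF S_psd, of u] by (simp add: Sx_def qn_opadd)

lemma kkt_constraint:
  assumes "(xb, yb, zb) \<in> Wstar gf1 f2 gh1 h2 A B c"
  shows "c = At xb + Bt yb"
  using WstarD(1)[OF assms] unfolding At_def Bt_def by (rule sym)

lemma x_subgradient: "f2 (x k) \<noteq> \<infinity> \<and> (\<forall>u. f2 (x k) + ereal (x_subgrad k \<bullet> (u - x k)) \<le> f2 u)"
proof -
  define g where "g = gf1 (xt k) + \<sigma> *\<^sub>R A (At (xt k) + Bt (yt k) - c + (1 / \<sigma>) *\<^sub>R zt k) - F (xt k)"
  have "F (x k) + g = gf1 (xt k) + A (z k) + Sx (x k - xt k)"
    using sigma_pos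
    by (simp add: g_def F_eq z_step linear_add[OF linA] linear_scale[OF linA] linear_diff[OF linA]
        linear_diff[OF linSx] algebra_simps)
  moreover have "f2 (x k) \<noteq> \<infinity> \<and> (\<forall>u. f2 (x k) + ereal ((- (F (x k) + g)) \<bullet> (u - x k)) \<le> f2 u)"
    by (rule subgradient_at_quadratic_minimizer[OF f2_props(3,2) F_psd])
       (use x_step in \<open>simp add: g_def\<close>)
  ultimately show ?thesis by (simp add: x_subgrad_def)
qed

lemma y_subgradient: "h2 (y k) \<noteq> \<infinity> \<and> (\<forall>v. h2 (y k) + ereal (y_subgrad k \<bullet> (v - y k)) \<le> h2 v)"
proof -
  define g where "g = gh1 (yt k) + \<sigma> *\<^sub>R B (At (x k) + Bt (yt k) - c + (1 / \<sigma>) *\<^sub>R z k) - H (yt k)"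
  have "H (y k) + g = gh1 (yt k) + B (z k + \<sigma> *\<^sub>R (At (x k) + Bt (y k) - c)) + Sy (y k - yt k)"
    using sigma_pos
    by (simp add: g_def H_eq linear_add[OF linB] linear_scale[OF linB] linear_diff[OF linB]
        linear_diff[OF linSy] algebra_simps)
  moreover have "h2 (y k) \<noteq> \<infinity> \<and> (\<forall>v. h2 (y k) + ereal ((- (H (y k) + g)) \<bullet> (v - y k)) \<le> h2 v)"
    by (rule subgradient_at_quadratic_minimizer[OF h2_props(3,2) H_psd])
       (use y_step in \<open>simp add: g_def\<close>)
  ultimately show ?thesis by (simp add: y_subgrad_def)
qed

lemma z_increment:
  "z (Suc k) - z k = \<sigma> *\<^sub>R At (x (Suc k) - x k) + (\<sigma> * \<rho>) *\<^sub>R (At (x k) + Bt (y k) - c)"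
proof -
  have zt: "zt k = z k - \<sigma> *\<^sub>R (At (x k) + Bt (yt k) - c)" using z_step[of k] by simp
  have "z (Suc k) = zt (Suc k) + \<sigma> *\<^sub>R (At (x (Suc k)) + Bt (yt (Suc k)) - c)" by (rule z_step)
  also have "\<dots> = z k + (\<sigma> * (\<rho> - 1)) *\<^sub>R (At (x k) + Bt (yt k) - c)
        + \<sigma> *\<^sub>R (At (x (Suc k)) + Bt (yt k) + \<rho> *\<^sub>R (Bt (y k) - Bt (yt k)) - c)"
    by (simp add: relax_z relax_y zt linear_add[OF linBt] linear_scale[OF linBt]
        linear_diff[OF linBt] algebra_simps)
  finally show ?thesis by (simp add: linear_diff[OF linAt] algebra_simps)
qed

lemma z_error_step:
  assumes "c = At xb + Bt yb"
  shows "z (Suc k) - zb = (z k - zb) + (\<sigma> * (\<rho> - 1)) *\<^sub>R At (x k - xb) + \<sigma> *\<^sub>R At (x (Suc k) - xb)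
      + (\<sigma> * \<rho>) *\<^sub>R Bt (y k - yb)"
proof -
  have "z (Suc k) - zb = (z (Suc k) - z k) + (z k - zb)" by simp
  also have "\<dots> = \<sigma> *\<^sub>R (At (x (Suc k) - xb) - At (x k - xb))
      + (\<sigma> * \<rho>) *\<^sub>R (At (x k - xb) + Bt (y k - yb)) + (z k - zb)"
    unfolding z_increment assms by (simp add: linear_diff[OF linAt] linear_diff[OF linBt] algebra_simps)
  finally show ?thesis by (simp add: algebra_simps)
qed

lemma x_monotone_at_kkt:
  assumes "(xb, yb, zb) \<in> Wstar gf1 f2 gh1 h2 A B c"
  shows "(gf1 (xt k) - gf1 xb) \<bullet> (x k - xb) + (z k - zb) \<bullet> At (x k - xb) + Sx (x k - xt k) \<bullet> (x k - xb) \<le> 0"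
proof -
  have "(x_subgrad k - (- (gf1 xb + A zb))) \<bullet> (x k - xb) \<ge> 0"
    using subgradient_monotone[OF f2_props(2)] x_subgradient[of k] WstarD(2,3)[OF assms] by blast
  moreover have "x_subgrad k - (- (gf1 xb + A zb)) = - ((gf1 (xt k) - gf1 xb) + A (z k - zb) + Sx (x k - xt k))"
    by (simp add: x_subgrad_def linear_diff[OF linA] algebra_simps)
  ultimately show ?thesis by (simp only: inner_add_left inner_minus_left adjA; linarith)
qed

lemma y_monotone_at_kkt:
  assumes kkt: "(xb, yb, zb) \<in> Wstar gf1 f2 gh1 h2 A B c"
  shows "(gh1 (yt k) - gh1 yb) \<bullet> (y k - yb) + (z k - zb + \<sigma> *\<^sub>R (At (x k) + Bt (y k) - c)) \<bullet> Bt (y k - yb)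
       + Sy (y k - yt k) \<bullet> (y k - yb) \<le> 0"
proof -
  have "(y_subgrad k - (- (gh1 yb + B zb))) \<bullet> (y k - yb) \<ge> 0"
    using subgradient_monotone[OF h2_props(2)] y_subgradient[of k] WstarD(4,5)[OF kkt] by blast
  moreover have "y_subgrad k - (- (gh1 yb + B zb))
      = - ((gh1 (yt k) - gh1 yb) + B (z k - zb + \<sigma> *\<^sub>R (At (x k) + Bt (y k) - c)) + Sy (y k - yt k))"
    by (simp add: y_subgrad_def linear_add[OF linB] linear_diff[OF linB] algebra_simps)
  ultimately show ?thesis by (simp only: inner_add_left inner_minus_left adjB; linarith)
qed

lemma x_successive_monotone:
  fixes k :: nat
  defines "D \<equiv> x (Suc k) - x k"
  shows "(gf1 (xt (Suc k)) - gf1 (xt k)) \<bullet> D + (z (Suc k) - z k) \<bullet> At D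
       + Sx (D - \<rho> *\<^sub>R (x k - xt k)) \<bullet> D \<le> 0"
proof -
  have "(x_subgrad (Suc k) - x_subgrad k) \<bullet> D \<ge> 0"
    unfolding D_def using subgradient_monotone[OF f2_props(2)] x_subgradient by blast
  moreover have "(x (Suc k) - xt (Suc k)) - (x k - xt k) = D - \<rho> *\<^sub>R (x k - xt k)"
    unfolding D_def by (simp add: relax_x algebra_simps)
  then have "x_subgrad (Suc k) - x_subgrad k
      = - ((gf1 (xt (Suc k)) - gf1 (xt k)) + A (z (Suc k) - z k) + Sx (D - \<rho> *\<^sub>R (x k - xt k)))"
    unfolding x_subgrad_def by (metis (no_types, lifting) linear_diff[OF linSx] linear_diff[OF linA]
        add_diff_add minus_diff_minus diff_add_eq_diff_diff_swap)
  ultimately show ?thesis by (simp only: inner_add_left inner_minus_left adjA; linarith)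
qed

section \<open>Descent of the Lyapunov function\<close>

definition Psi :: "'x \<Rightarrow> 'y \<Rightarrow> 'z \<Rightarrow> nat \<Rightarrow> real" where
  "Psi xb yb zb k = (1 / (\<sigma> * \<rho>)) * (norm (z k - zb + (\<sigma> * (\<rho> - 1)) *\<^sub>R At (x k - xb)))\<^sup>2
                      + \<sigma> * (2 - \<rho>) * (norm (At (x k - xb)))\<^sup>2
                      + (1 / \<rho>) * qn (opadd SFh S) (xt (k + 1) - xb)
                      + (1 / \<rho>) * qn (opadd SHh T) (yt k - yb)"

definition delta :: "real \<Rightarrow> nat \<Rightarrow> real" where
  "delta lam k = qn (\<lambda>u. (1/2) *\<^sub>R SF u) (xt (k + 1) - x (k + 1))
                      + qn (\<lambda>v. (1/2) *\<^sub>R SH v + (2 - \<rho>) *\<^sub>R (SHh v + T v)) (yt k - y k)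
                      + (1 - lam) * (2 - \<rho>) * qn (opadd SFh S) (xt k - x k)
                      + \<sigma> * (2 * lam - 1) * (2 - \<rho>) * (norm (At (x (k + 1)) + Bt (y k) - c))\<^sup>2
                      + (\<sigma> * (1 - lam) * (2 - \<rho>) / 2) * (norm (Bt (y k - y (k - 1))))\<^sup>2
                      + (lam * (2 - \<rho>)\<^sup>2 / \<rho>) * qn F (x (k + 1) - x k)"

definition xi :: "nat \<Rightarrow> real" where
  "xi k = qn SFh (xt (k + 1) - x (k + 1)) + qn SHh (yt k - y k)"

definition E :: "real \<Rightarrow> 'x \<Rightarrow> 'y \<Rightarrow> 'z \<Rightarrow> nat \<Rightarrow> real" where
  "E lam xb yb zb k = Psi xb yb zb k + (2 - \<rho>) * qn (opadd SFh S) (xt k - x k)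
                      + \<sigma> * (1 - lam) * (2 - \<rho>) * (norm (At (x k) + Bt (y (k - 1)) - c))\<^sup>2"

lemma Psi_decrease:
  fixes k :: nat
  assumes kkt: "(xb, yb, zb) \<in> Wstar gf1 f2 gh1 h2 A B c"
  defines "n \<equiv> Suc k"
  shows "Psi xb yb zb k - Psi xb yb zb n \<ge> (2 - \<rho>) * qn Sx (xt n - x n) + (2 - \<rho>) * qn Sy (yt k - y k)
      + ((1/2) * qn SF (xt n - x n) - qn SFh (xt n - x n)) + ((1/2) * qn SH (yt k - y k) - qn SHh (yt k - y k))
      + \<sigma> * (2 - \<rho>) * (norm (At (x k) + Bt (y k) - c))\<^sup>2"
proof -
  have cdef: "c = At xb + Bt yb" by (rule kkt_constraint[OF kkt])
  define W where "W = z k - zb"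
  define U0 where "U0 = At (x k - xb)"
  define U where "U = At (x n - xb)"
  define V where "V = Bt (y k - yb)"
  have res: "At (x k) + Bt (y k) - c = U0 + V"
    unfolding U0_def V_def cdef by (simp add: linear_diff[OF linAt] linear_diff[OF linBt] algebra_simps)
  have W1: "z n - zb = W + (\<sigma> * (\<rho> - 1)) *\<^sub>R U0 + \<sigma> *\<^sub>R U + (\<sigma> * \<rho>) *\<^sub>R V"
    unfolding n_def W_def U0_def U_def V_def by (rule z_error_step[OF cdef])
  have multiplier_part: "(1 / (\<sigma> * \<rho>)) * (norm (W + (\<sigma> * (\<rho> - 1)) *\<^sub>R U0))\<^sup>2
       - (1 / (\<sigma> * \<rho>)) * (norm ((z n - zb) + (\<sigma> * (\<rho> - 1)) *\<^sub>R U))\<^sup>2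
       + \<sigma> * (2 - \<rho>) * (norm U0)\<^sup>2 - \<sigma> * (2 - \<rho>) * (norm U)\<^sup>2
     = - 2 * ((z n - zb) \<bullet> U) - 2 * ((W + \<sigma> *\<^sub>R (U0 + V)) \<bullet> V) + \<sigma> * (2 - \<rho>) * (norm (U0 + V))\<^sup>2"
    unfolding W1 by (rule multiplier_potential_identity[OF sigma_pos rho(1)])
  have x_part: "(1/\<rho>) * qn Sx (xt n - xb) - (1/\<rho>) * qn Sx (xt (Suc n) - xb)
      = -2 * (Sx (x n - xt n) \<bullet> (x n - xb)) + (2 - \<rho>) * qn Sx (xt n - x n)"
    using qn_relaxation_step[OF Sx_psd rho(1), of "xt n - xb" "x n - xt n"]
      qn_minus_commute[OF linSx, of "x n" "xt n"] by (simp add: relax_x algebra_simps)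
  have y_part: "(1/\<rho>) * qn Sy (yt k - yb) - (1/\<rho>) * qn Sy (yt (Suc k) - yb)
      = -2 * (Sy (y k - yt k) \<bullet> (y k - yb)) + (2 - \<rho>) * qn Sy (yt k - y k)"
    using qn_relaxation_step[OF Sy_psd rho(1), of "yt k - yb" "y k - yt k"]
      qn_minus_commute[OF linSy, of "y k" "yt k"] by (simp add: relax_y algebra_simps)
  have "Psi xb yb zb k - Psi xb yb zb n =
       (1 / (\<sigma> * \<rho>)) * (norm (W + (\<sigma> * (\<rho> - 1)) *\<^sub>R U0))\<^sup>2
       - (1 / (\<sigma> * \<rho>)) * (norm ((z n - zb) + (\<sigma> * (\<rho> - 1)) *\<^sub>R U))\<^sup>2
       + \<sigma> * (2 - \<rho>) * (norm U0)\<^sup>2 - \<sigma> * (2 - \<rho>) * (norm U)\<^sup>2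
       + ((1/\<rho>) * qn Sx (xt n - xb) - (1/\<rho>) * qn Sx (xt (Suc n) - xb))
       + ((1/\<rho>) * qn Sy (yt k - yb) - (1/\<rho>) * qn Sy (yt (Suc k) - yb))"
    unfolding Psi_def W_def U0_def U_def n_def Sx_def Sy_def by simp
  moreover have "- 2 * ((z n - zb) \<bullet> U) - 2 * (Sx (x n - xt n) \<bullet> (x n - xb))
      \<ge> (1/2) * qn SF (xt n - x n) - qn SFh (xt n - x n)"
    using x_monotone_at_kkt[OF kkt, of n] gradient_three_point_bound[OF f1_bounds SF_psd, where v="xt n" and w=xb and p="x n"]
      qn_minus_commute[OF psd_op_linear[OF SF_psd], of "x n" "xt n"]
      qn_minus_commute[OF psd_op_linear[OF SFh_psd], of "x n" "xt n"]
    unfolding U_def by linarith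
  moreover have "- 2 * ((W + \<sigma> *\<^sub>R (U0 + V)) \<bullet> V) - 2 * (Sy (y k - yt k) \<bullet> (y k - yb))
      \<ge> (1/2) * qn SH (yt k - y k) - qn SHh (yt k - y k)"
    using y_monotone_at_kkt[OF kkt, of k] gradient_three_point_bound[OF h1_bounds SH_psd, where v="yt k" and w=yb and p="y k"]
      qn_minus_commute[OF psd_op_linear[OF SH_psd], of "y k" "yt k"]
      qn_minus_commute[OF psd_op_linear[OF SHh_psd], of "y k" "yt k"]
    unfolding W_def V_def res by linarith
  ultimately show ?thesis unfolding res using multiplier_part x_part y_part by linarith
qed

lemma x_gradient_increment_lower:
  "(gf1 (xt (Suc k)) - gf1 (xt k)) \<bullet> (x (Suc k) - x k)
     \<ge> - (\<rho> / 4) * qn Sx ((x k - xt k) - (x (Suc k) - x k))"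
proof -
  define D where "D = x (Suc k) - x k"
  define e0 where "e0 = x k - xt k"
  define g where "g = (gf1 (xt (Suc k)) - gf1 (xt k)) \<bullet> D"
  have "xt (Suc k) - xt k - \<rho> *\<^sub>R D = \<rho> *\<^sub>R (e0 - D)"
    unfolding e0_def D_def by (simp add: relax_x algebra_simps)
  then have "\<rho> * g \<ge> - (1/4) * \<rho>\<^sup>2 * qn SFh (e0 - D)"
    using gradient_increment_bound[OF f1_bounds SF_psd SFh_psd, of "xt (Suc k)" "xt k" "\<rho> *\<^sub>R D"]
      qn_scaleR[OF psd_op_linear[OF SFh_psd], of \<rho> "e0 - D"] by (simp add: g_def)
  moreover have "\<rho>\<^sup>2 * qn SFh (e0 - D) \<le> \<rho>\<^sup>2 * qn Sx (e0 - D)"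
    by (rule mult_left_mono[OF qn_SFh_le_Sx]) simp
  ultimately have "\<rho> * (g + (\<rho> / 4) * qn Sx (e0 - D)) \<ge> 0"
    by (simp add: algebra_simps power2_eq_square)
  then show ?thesis using rho(1) unfolding g_def D_def e0_def by (simp add: zero_le_mult_iff)
qed

text \<open>Monotonicity of \<open>\<partial>f\<^sub>2\<close> between the steps \<open>k\<close> and \<open>k + 1\<close>.\<close>
lemma successive_x_estimate:
  "\<sigma> * \<rho> * (norm (At (x (Suc k)) + Bt (y k) - c))\<^sup>2 + (2 - \<rho>) * qn F (x (Suc k) - x k)
     \<le> \<rho> * qn Sx (xt k - x k) + \<sigma> * \<rho> * (norm (At (x k) + Bt (y k) - c))\<^sup>2"
proof -
  define D where "D = x (Suc k) - x k"
  define e0 where "e0 = x k - xt k"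
  define R where "R = At (x k) + Bt (y k) - c"
  define g where "g = (gf1 (xt (Suc k)) - gf1 (xt k)) \<bullet> D"
  define \<alpha> where "\<alpha> = qn Sx e0"
  define \<beta> where "\<beta> = qn Sx D"
  define \<gamma> where "\<gamma> = Sx e0 \<bullet> D"
  define Q where "Q = (norm (At D))\<^sup>2"
  define P where "P = R \<bullet> At D"
  have Z: "qn Sx (e0 - D) = \<alpha> - 2 * \<gamma> + \<beta>"
    unfolding \<alpha>_def \<beta>_def \<gamma>_def by (rule qn_diff[OF Sx_psd])
  have g_lower: "g \<ge> - (\<rho> / 4) * qn Sx (e0 - D)"
    unfolding g_def e0_def D_def by (rule x_gradient_increment_lower)
  have "g + \<sigma> * Q + \<sigma> * \<rho> * P + \<beta> - \<rho> * \<gamma> \<le> 0"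
  proof -
    have "(z (Suc k) - z k) \<bullet> At D = \<sigma> * Q + \<sigma> * \<rho> * P"
      unfolding z_increment Q_def P_def D_def R_def by (simp add: inner_add_left power2_norm_eq_inner)
    moreover have "Sx (D - \<rho> *\<^sub>R e0) \<bullet> D = \<beta> - \<rho> * \<gamma>"
      unfolding \<beta>_def \<gamma>_def qn_def
      by (simp add: linear_diff[OF linSx] linear_scale[OF linSx] inner_diff_left inner_diff_right inner_commute)
    ultimately show ?thesis using x_successive_monotone[of k] unfolding g_def D_def e0_def by linarith
  qed
  moreover have "\<rho> * qn Sx (e0 - D) \<ge> 0" using rho(1) qn_nonneg[OF Sx_psd] by simp
  moreover have "\<rho> * qn Sx (e0 - D) = \<rho> * \<alpha> - 2 * (\<rho> * \<gamma>) + \<rho> * \<beta>"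
    unfolding Z by (simp add: algebra_simps)
  moreover have "(\<rho> / 4) * qn Sx (e0 - D) = (\<rho> * qn Sx (e0 - D)) / 4" by simp
  moreover have "\<sigma> * \<rho> * (2 * P + Q) + (2 - \<rho>) * (\<beta> + \<sigma> * Q)
      = 2 * (\<sigma> * \<rho> * P) + 2 * \<beta> + 2 * (\<sigma> * Q) - \<rho> * \<beta>"
    by (simp add: algebra_simps)
  ultimately have key: "\<sigma> * \<rho> * (2 * P + Q) + (2 - \<rho>) * (\<beta> + \<sigma> * Q) \<le> \<rho> * \<alpha>"
    using g_lower by linarith
  have "At (x (Suc k)) + Bt (y k) - c = R + At D"
    unfolding R_def D_def by (simp add: linear_diff[OF linAt] algebra_simps)
  then have "(norm (At (x (Suc k)) + Bt (y k) - c))\<^sup>2 = (norm R)\<^sup>2 + 2 * P + Q"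
    unfolding P_def Q_def by (simp add: power2_norm_eq_inner inner_add_left inner_add_right inner_commute)
  then have "\<sigma> * \<rho> * (norm (At (x (Suc k)) + Bt (y k) - c))\<^sup>2 = \<sigma> * \<rho> * (norm R)\<^sup>2 + \<sigma> * \<rho> * (2 * P + Q)"
    by (simp add: algebra_simps)
  moreover have "qn F (x (Suc k) - x k) = \<beta> + \<sigma> * Q" unfolding \<beta>_def Q_def D_def by (rule qn_F)
  moreover have "\<alpha> = qn Sx (xt k - x k)" unfolding \<alpha>_def e0_def by (rule qn_minus_commute[OF linSx])
  ultimately show ?thesis using key unfolding R_def by simp
qed

text \<open>The descent combines \<open>Psi_decrease\<close>, \<open>\<lambda>(2 - \<rho>)/\<rho>\<close> times \<open>successive_x_estimate\<close>, and
  \<open>\<parallel>a\<parallel>\<^sup>2 + \<parallel>b\<parallel>\<^sup>2 \<ge> \<parallel>a - b\<parallel>\<^sup>2/2\<close> for the two consecutive residuals, weighted by \<open>(1 - \<lambda>)\<sigma>(2 - \<rho>)\<close>.\<close>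
lemma E_descent:
  assumes kkt: "(xb, yb, zb) \<in> Wstar gf1 f2 gh1 h2 A B c" and lam: "0 \<le> lam" "lam \<le> 1"
  shows "E lam xb yb zb k - E lam xb yb zb (k + 1) \<ge> delta lam k - xi k"
proof -
  define n where "n = Suc k"
  define qx1 where "qx1 = qn Sx (xt n - x n)"
  define qy where "qy = qn Sy (yt k - y k)"
  define qSF qSFh where "qSF = qn SF (xt n - x n)" and "qSFh = qn SFh (xt n - x n)"
  define qSH qSHh where "qSH = qn SH (yt k - y k)" and "qSHh = qn SHh (yt k - y k)"
  define \<alpha> where "\<alpha> = qn Sx (xt k - x k)"
  define qF where "qF = qn F (x n - x k)"
  define RR where "RR = (norm (At (x k) + Bt (y k) - c))\<^sup>2"
  define R2 where "R2 = (norm (At (x k) + Bt (y (k - 1)) - c))\<^sup>2"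
  define MM where "MM = (norm (At (x n) + Bt (y k) - c))\<^sup>2"
  define BB where "BB = (norm (Bt (y k - y (k - 1))))\<^sup>2"
  define PsiD where "PsiD = Psi xb yb zb k - Psi xb yb zb n"
  have Psi: "PsiD \<ge> (2-\<rho>)*qx1 + (2-\<rho>)*qy + ((1/2) * qSF - qSFh) + ((1/2) * qSH - qSHh) + \<sigma>*(2-\<rho>)*RR"
    using Psi_decrease[OF kkt, of k]
    unfolding PsiD_def n_def qx1_def qy_def qSF_def qSFh_def qSH_def qSHh_def RR_def .
  have "\<rho> * \<alpha> + \<sigma> * \<rho> * RR - \<sigma> * \<rho> * MM - (2 - \<rho>) * qF \<ge> 0"
    using successive_x_estimate[of k] unfolding \<alpha>_def RR_def MM_def qF_def n_def by linarith
  then have X: "0 \<le> lam * (2 - \<rho>) / \<rho> * (\<rho> * \<alpha> + \<sigma> * \<rho> * RR - \<sigma> * \<rho> * MM - (2 - \<rho>) * qF)"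
    using lam(1) rho by simp
  have "(At (x k) + Bt (y k) - c) - (At (x k) + Bt (y (k - 1)) - c) = Bt (y k - y (k - 1))"
    by (simp add: linear_diff[OF linBt])
  then have "RR + R2 - (1/2) * BB \<ge> 0"
    using half_norm_diff_sq_le[of "At (x k) + Bt (y k) - c" "At (x k) + Bt (y (k - 1)) - c"]
    unfolding RR_def R2_def BB_def by simp
  then have Y: "0 \<le> (1-lam)*(\<sigma>*(2-\<rho>)) * (RR + R2 - (1/2)*BB)"
    using lam(2) sigma_pos rho(2) by simp
  have regroup: "PsiD + (2-\<rho>)*\<alpha> + \<sigma>*(1-lam)*(2-\<rho>)*R2 - ((2-\<rho>)*qx1 + \<sigma>*(1-lam)*(2-\<rho>)*MM)
     - (((1/2) * qSF + ((1/2) * qSH + (2-\<rho>)*qy) + (1-lam)*(2-\<rho>)*\<alpha> + \<sigma>*(2*lam-1)*(2-\<rho>)*MM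
        + (\<sigma>*(1-lam)*(2-\<rho>)/2)*BB + (lam*(2 - \<rho>)\<^sup>2 / \<rho>)*qF) - (qSFh + qSHh))
     = (PsiD - ((2-\<rho>)*qx1 + (2-\<rho>)*qy + ((1/2) * qSF - qSFh) + ((1/2) * qSH - qSHh) + \<sigma>*(2-\<rho>)*RR))
       + lam * (2 - \<rho>) / \<rho> * (\<rho> * \<alpha> + \<sigma> * \<rho> * RR - \<sigma> * \<rho> * MM - (2 - \<rho>) * qF)
       + (1-lam)*(\<sigma>*(2-\<rho>)) * (RR + R2 - (1/2)*BB)"
    using rho(1) by (simp add: field_simps power2_eq_square)
  have "qn (\<lambda>u. (1/2) *\<^sub>R SF u) w = (1/2) * qn SF w" for w by (simp add: qn_def)
  moreover have "qn (\<lambda>v. (1/2) *\<^sub>R SH v + (2 - \<rho>) *\<^sub>R (SHh v + T v)) w = (1/2) * qn SH w + (2 - \<rho>) * qn Sy w" for w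
    by (simp add: qn_def Sy_def opadd_def inner_add_right)
  ultimately have "delta lam k = (1/2) * qSF + ((1/2) * qSH + (2-\<rho>)*qy) + (1-lam)*(2-\<rho>)*\<alpha>
      + \<sigma>*(2*lam-1)*(2-\<rho>)*MM + (\<sigma>*(1-lam)*(2-\<rho>)/2)*BB + (lam*(2 - \<rho>)\<^sup>2 / \<rho>)*qF"
    unfolding delta_def qSF_def qSH_def qy_def \<alpha>_def MM_def BB_def qF_def n_def Sx_def by simp
  moreover have "E lam xb yb zb k = Psi xb yb zb k + (2-\<rho>)*\<alpha> + \<sigma>*(1-lam)*(2-\<rho>)*R2"
    unfolding E_def \<alpha>_def R2_def Sx_def by simp
  moreover have "E lam xb yb zb (k + 1) = Psi xb yb zb n + (2-\<rho>)*qx1 + \<sigma>*(1-lam)*(2-\<rho>)*MM"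
    unfolding E_def n_def qx1_def MM_def Sx_def by simp
  moreover have "xi k = qSFh + qSHh" unfolding xi_def qSFh_def qSHh_def n_def by simp
  ultimately show ?thesis using regroup Psi X Y unfolding PsiD_def by linarith
qed

section \<open>Convergence\<close>

lemma E_expand: "E lam xb yb zb k = (1 / (\<sigma> * \<rho>)) * (norm (z k - zb + (\<sigma> * (\<rho> - 1)) *\<^sub>R At (x k - xb)))\<^sup>2
   + \<sigma> * (2 - \<rho>) * (norm (At (x k - xb)))\<^sup>2 + (1 / \<rho>) * qn Sx (xt (k + 1) - xb) + (1 / \<rho>) * qn Sy (yt k - yb)
   + (2 - \<rho>) * qn Sx (xt k - x k) + \<sigma> * (1 - lam) * (2 - \<rho>) * (norm (At (x k) + Bt (y (k - 1)) - c))\<^sup>2"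
  by (simp add: E_def Psi_def Sx_def Sy_def)

lemma E_summands_nonneg:
  assumes "lam \<le> 1"
  shows "0 \<le> (1 / (\<sigma> * \<rho>)) * (norm (z k - zb + (\<sigma> * (\<rho> - 1)) *\<^sub>R At (x k - xb)))\<^sup>2"
    "0 \<le> \<sigma> * (2 - \<rho>) * (norm (At (x k - xb)))\<^sup>2"
    "0 \<le> (1 / \<rho>) * qn Sx (xt (k + 1) - xb)" "0 \<le> (1 / \<rho>) * qn Sy (yt k - yb)"
    "0 \<le> (2 - \<rho>) * qn Sx (xt k - x k)"
    "0 \<le> \<sigma> * (1 - lam) * (2 - \<rho>) * (norm (At (x k) + Bt (y (k - 1)) - c))\<^sup>2"
  using sigma_pos rho assms qn_nonneg[OF Sx_psd] qn_nonneg[OF Sy_psd] by simp_all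

lemma E_nonneg: "lam \<le> 1 \<Longrightarrow> 0 \<le> E lam xb yb zb k"
  unfolding E_expand by (intro add_nonneg_nonneg E_summands_nonneg)

lemma delta_summands_nonneg:
  assumes "1/2 \<le> lam" "lam \<le> 1"
  shows "0 \<le> qn (\<lambda>u. (1/2) *\<^sub>R SF u) (xt (k + 1) - x (k + 1))"
    "qn (\<lambda>v. (1/2) *\<^sub>R SH v + (2 - \<rho>) *\<^sub>R (SHh v + T v)) (yt k - y k) \<ge> (2 - \<rho>) * qn Sy (yt k - y k)"
    "0 \<le> (2 - \<rho>) * qn Sy (yt k - y k)"
    "0 \<le> (1 - lam) * (2 - \<rho>) * qn (opadd SFh S) (xt k - x k)"
    "0 \<le> \<sigma> * (2 * lam - 1) * (2 - \<rho>) * (norm (At (x (k + 1)) + Bt (y k) - c))\<^sup>2"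
    "0 \<le> (\<sigma> * (1 - lam) * (2 - \<rho>) / 2) * (norm (Bt (y k - y (k - 1))))\<^sup>2"
    "0 \<le> (lam * (2 - \<rho>)\<^sup>2 / \<rho>) * qn F (x (k + 1) - x k)"
  using qn_nonneg[OF SF_psd, of "xt (k + 1) - x (k + 1)"] qn_nonneg[OF SH_psd, of "yt k - y k"]
    qn_nonneg[OF Sy_psd, of "yt k - y k"] qn_nonneg[OF Sx_psd, of "xt k - x k"]
    qn_nonneg[OF F_psd, of "x (k + 1) - x k"] rho assms sigma_pos
  by (simp_all add: qn_def Sx_def Sy_def opadd_def inner_add_right)

lemma delta_nonneg: "1/2 \<le> lam \<Longrightarrow> lam \<le> 1 \<Longrightarrow> 0 \<le> delta lam k"
  using delta_summands_nonneg[of lam k] unfolding delta_def by linarith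

lemma xi_nonneg: "0 \<le> xi k"
  using qn_nonneg[OF SFh_psd] qn_nonneg[OF SHh_psd] by (simp add: xi_def)

lemma E_quasi_fejer:
  assumes kkt: "(xb, yb, zb) \<in> Wstar gf1 f2 gh1 h2 A B c" and lam: "1/2 \<le> lam" "lam \<le> 1"
    and "summable xi"
  shows "\<forall>n\<ge>1. E lam xb yb zb n \<le> E lam xb yb zb 1 + suminf xi"
    and "delta lam \<longlonglongrightarrow> 0" and "convergent (E lam xb yb zb)"
proof -
  have "E lam xb yb zb (Suc k) \<le> E lam xb yb zb k - delta lam k + xi k" for k
    using E_descent[OF kkt _ lam(2), of k] lam(1) by simp
  note F = quasi_fejer[where K=1, OF this E_nonneg[OF lam(2)] delta_nonneg[OF lam] xi_nonneg \<open>summable xi\<close>]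
  show "\<forall>n\<ge>1. E lam xb yb zb n \<le> E lam xb yb zb 1 + suminf xi"
    and "delta lam \<longlonglongrightarrow> 0" and "convergent (E lam xb yb zb)"
    using F by simp_all
qed

lemma delta_tendsto_zero_consequences:
  assumes lam: "1/2 < lam" "lam \<le> 1" and Sy_pd: "pd_op Sy" and delta: "delta lam \<longlonglongrightarrow> 0"
  shows "(\<lambda>k. At (x (Suc k)) + Bt (y k) - c) \<longlonglongrightarrow> 0"
    and "(\<lambda>k. x (Suc k) - x k) \<longlonglongrightarrow> 0"
    and "(\<lambda>k. y k - yt k) \<longlonglongrightarrow> 0"
proof -
  note summands = delta_summands_nonneg[of lam, OF less_imp_le[OF lam(1)] lam(2)]
  have bound: "delta lam k \<ge> \<sigma> * (2 * lam - 1) * (2 - \<rho>) * (norm (At (x (Suc k)) + Bt (y k) - c))\<^sup>2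
      \<and> delta lam k \<ge> (lam * (2 - \<rho>)\<^sup>2 / \<rho>) * qn F (x (Suc k) - x k)
      \<and> delta lam k \<ge> (2 - \<rho>) * qn Sy (yt k - y k)" for k
    using summands[of k] unfolding delta_def by simp
  have "(\<lambda>k. (norm (At (x (Suc k)) + Bt (y k) - c))\<^sup>2) \<longlonglongrightarrow> 0"
    by (rule tendsto_zero_if_scaled_le[where c="\<sigma> * (2 * lam - 1) * (2 - \<rho>)", OF _ _ _ delta])
       (use bound sigma_pos lam rho in auto)
  then show "(\<lambda>k. At (x (Suc k)) + Bt (y k) - c) \<longlonglongrightarrow> 0"
    by (rule tendsto_zero_if_norm_sq_tendsto_zero)
  have "(\<lambda>k. qn F (x (Suc k) - x k)) \<longlonglongrightarrow> 0"
    by (rule tendsto_zero_if_scaled_le[where c="lam * (2 - \<rho>)\<^sup>2 / \<rho>", OF _ _ _ delta])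
       (use bound lam rho qn_nonneg[OF F_psd] in auto)
  then show "(\<lambda>k. x (Suc k) - x k) \<longlonglongrightarrow> 0"
    by (rule tendsto_zero_if_qn_tendsto_zero[OF F_pd])
  have "(\<lambda>k. qn Sy (yt k - y k)) \<longlonglongrightarrow> 0"
    by (rule tendsto_zero_if_scaled_le[where c="2 - \<rho>", OF _ _ _ delta])
       (use bound rho qn_nonneg[OF Sy_psd] in auto)
  then have "(\<lambda>k. yt k - y k) \<longlonglongrightarrow> 0"
    by (rule tendsto_zero_if_qn_tendsto_zero[OF Sy_pd])
  then show "(\<lambda>k. y k - yt k) \<longlonglongrightarrow> 0"
    using tendsto_minus[of "\<lambda>k. yt k - y k" 0] by simp
qed

text \<open>\<open>x (k+1) - xt (k+1) = (x (k+1) - x k) + (1 - \<rho>) (x k - xt k)\<close> with \<open>\<bar>1 - \<rho>\<bar> < 1\<close>.\<close>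
lemma x_gap_tendsto_zero:
  assumes "(\<lambda>k. x (Suc k) - x k) \<longlonglongrightarrow> 0"
  shows "(\<lambda>k. x k - xt k) \<longlonglongrightarrow> 0"
proof -
  have "(\<lambda>k. norm (x k - xt k)) \<longlonglongrightarrow> 0"
  proof (rule perturbed_contraction_tendsto_zero[where q = "\<bar>1 - \<rho>\<bar>"])
    fix k
    have "x (Suc k) - xt (Suc k) = (x (Suc k) - x k) + (1 - \<rho>) *\<^sub>R (x k - xt k)"
      by (simp add: relax_x algebra_simps)
    then show "norm (x (Suc k) - xt (Suc k)) \<le> \<bar>1 - \<rho>\<bar> * norm (x k - xt k) + norm (x (Suc k) - x k)"
      by (metis norm_triangle_ineq norm_scaleR add.commute)
  qed (use rho tendsto_norm_zero[OF assms] in auto)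
  then show ?thesis by (rule tendsto_norm_zero_cancel)
qed

lemma residual_tendsto_zero:
  assumes "(\<lambda>k. At (x (Suc k)) + Bt (y k) - c) \<longlonglongrightarrow> 0" and "(\<lambda>k. x (Suc k) - x k) \<longlonglongrightarrow> 0"
  shows "(\<lambda>k. At (x k) + Bt (y k) - c) \<longlonglongrightarrow> 0"
proof -
  have "(\<lambda>k. (At (x (Suc k)) + Bt (y k) - c) - At (x (Suc k) - x k)) \<longlonglongrightarrow> 0 - At 0"
    by (intro tendsto_intros assms(1) tendsto_linear[OF linAt assms(2)])
  moreover have "(At (x (Suc k)) + Bt (y k) - c) - At (x (Suc k) - x k) = At (x k) + Bt (y k) - c" for k
    by (simp add: linear_diff[OF linAt])
  ultimately show ?thesis by (simp add: linear_0[OF linAt])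
qed

lemma z_gap_tendsto_zero:
  assumes "(\<lambda>k. At (x k) + Bt (y k) - c) \<longlonglongrightarrow> 0" and "(\<lambda>k. y k - yt k) \<longlonglongrightarrow> 0"
  shows "(\<lambda>k. z k - zt k) \<longlonglongrightarrow> 0"
proof -
  have "(\<lambda>k. \<sigma> *\<^sub>R ((At (x k) + Bt (y k) - c) - Bt (y k - yt k))) \<longlonglongrightarrow> \<sigma> *\<^sub>R (0 - Bt 0)"
    by (intro tendsto_intros assms(1) tendsto_linear[OF linBt assms(2)])
  moreover have "\<sigma> *\<^sub>R ((At (x k) + Bt (y k) - c) - Bt (y k - yt k)) = z k - zt k" for k
    by (simp add: z_step linear_diff[OF linBt] algebra_simps)
  ultimately show ?thesis by (simp add: linear_0[OF linBt])
qed

lemma E_summands_le: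
  assumes "lam \<le> 1" and "E lam xb yb zb k \<le> M"
  shows "(1 / (\<sigma> * \<rho>)) * (norm (z k - zb + (\<sigma> * (\<rho> - 1)) *\<^sub>R At (x k - xb)))\<^sup>2 \<le> M"
    and "\<sigma> * (2 - \<rho>) * (norm (At (x k - xb)))\<^sup>2 \<le> M"
    and "(1 / \<rho>) * qn Sx (xt (k + 1) - xb) \<le> M"
    and "(1 / \<rho>) * qn Sy (yt k - yb) \<le> M"
    and "(2 - \<rho>) * qn Sx (xt k - x k) \<le> M"
  using assms(2) E_summands_nonneg(1)[OF assms(1), where zb=zb and xb=xb and k=k]
    E_summands_nonneg(2,3)[OF assms(1), where xb=xb and k=k]
    E_summands_nonneg(4)[OF assms(1), where yb=yb and k=k] E_summands_nonneg(5,6)[OF assms(1), where k=k]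
  unfolding E_expand by linarith+

text \<open>The bound on \<open>x k - xb\<close> uses \<open>\<parallel>\<cdot>\<parallel>\<^sub>F\<^sup>2 = \<parallel>\<cdot>\<parallel>\<^sub>S\<^sub>x\<^sup>2 + \<sigma>\<parallel>A\<^sup>*\<cdot>\<parallel>\<^sup>2\<close> and the bound on \<open>xt k - xb\<close>,
  which is a summand of \<open>E (k - 1)\<close>; hence \<open>k \<ge> 2\<close>.\<close>
lemma iterate_norm_bounds:
  assumes lam: "lam \<le> 1" and EM: "\<And>n. n \<ge> 1 \<Longrightarrow> E lam xb yb zb n \<le> M" and Sy_pd: "pd_op Sy"
  obtains Cx Cy Cz where "\<And>k. k \<ge> 2 \<Longrightarrow> norm (x k - xb) \<le> Cx"
    and "\<And>k. k \<ge> 1 \<Longrightarrow> norm (yt k - yb) \<le> Cy"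
    and "\<And>k. k \<ge> 1 \<Longrightarrow> norm (z k - zb) \<le> Cz"
proof -
  obtain \<mu>F where \<mu>F: "\<mu>F > 0" "\<And>u. \<mu>F * (norm u)\<^sup>2 \<le> qn F u" using pd_op_coercive[OF F_pd] by blast
  obtain \<mu>Y where \<mu>Y: "\<mu>Y > 0" "\<And>u. \<mu>Y * (norm u)\<^sup>2 \<le> qn Sy u" using pd_op_coercive[OF Sy_pd] by blast
  note Eb = E_summands_le[OF lam EM]
  have bA: "norm (At (x k - xb)) \<le> sqrt (M / (\<sigma> * (2 - \<rho>)))" if "k \<ge> 1" for k
    using Eb(2)[OF that] sigma_pos rho by (intro norm_le_sqrt_if_scaled_sq_le) simp_all
  have bZ: "norm (z k - zb + (\<sigma> * (\<rho> - 1)) *\<^sub>R At (x k - xb)) \<le> sqrt (M / (1 / (\<sigma> * \<rho>)))" if "k \<ge> 1" for k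
    using Eb(1)[OF that] sigma_pos rho by (intro norm_le_sqrt_if_scaled_sq_le) simp_all
  have "norm (z k - zb) \<le> sqrt (M / (1 / (\<sigma> * \<rho>))) + \<bar>\<sigma> * (\<rho> - 1)\<bar> * sqrt (M / (\<sigma> * (2 - \<rho>)))"
    if "k \<ge> 1" for k
    using norm_triangle_ineq4[of "z k - zb + (\<sigma> * (\<rho> - 1)) *\<^sub>R At (x k - xb)" "(\<sigma> * (\<rho> - 1)) *\<^sub>R At (x k - xb)"]
      bZ[OF that] mult_left_mono[OF bA[OF that] abs_ge_zero[of "\<sigma> * (\<rho> - 1)"]] by simp
  moreover have "norm (yt k - yb) \<le> sqrt ((\<rho> * M) / \<mu>Y)" if "k \<ge> 1" for k
  proof (rule norm_le_sqrt_if_scaled_sq_le[OF \<mu>Y(1)])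
    have "qn Sy (yt k - yb) \<le> \<rho> * M" using Eb(4)[OF that] rho by (simp add: field_simps)
    then show "\<mu>Y * (norm (yt k - yb))\<^sup>2 \<le> \<rho> * M" using \<mu>Y(2)[of "yt k - yb"] by linarith
  qed
  moreover have "norm (x k - xb) \<le> sqrt ((2 * (\<rho> * M) + 3 * (M / (2 - \<rho>))) / \<mu>F)" if "k \<ge> 2" for k
  proof (rule norm_le_sqrt_if_scaled_sq_le[OF \<mu>F(1)])
    have k: "k - 1 \<ge> 1" "k - 1 + 1 = k" "k \<ge> 1" using that by auto
    have "qn Sx (xt k - xb) \<le> \<rho> * M" using Eb(3)[OF k(1)] rho unfolding k(2) by (simp add: field_simps)
    moreover have "qn Sx (x k - xt k) \<le> M / (2 - \<rho>)"
      using Eb(5)[OF k(3)] rho qn_minus_commute[OF linSx, of "x k" "xt k"] by (simp add: field_simps)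
    moreover have "\<sigma> * (norm (At (x k - xb)))\<^sup>2 \<le> M / (2 - \<rho>)"
      using Eb(2)[OF k(3)] rho by (simp add: field_simps)
    moreover have "qn Sx (x k - xb) \<le> 2 * qn Sx (xt k - xb) + 2 * qn Sx (x k - xt k)"
      using qn_add_le_sum[OF Sx_psd, of "xt k - xb" "x k - xt k"] by simp
    ultimately have "qn F (x k - xb) \<le> 2 * (\<rho> * M) + 3 * (M / (2 - \<rho>))" unfolding qn_F by linarith
    then show "\<mu>F * (norm (x k - xb))\<^sup>2 \<le> 2 * (\<rho> * M) + 3 * (M / (2 - \<rho>))"
      using \<mu>F(2)[of "x k - xb"] by linarith
  qed
  ultimately show ?thesis using that by blast
qed

lemma iterates_bounded:
  assumes "lam \<le> 1" and "\<And>n. n \<ge> 1 \<Longrightarrow> E lam xb yb zb n \<le> M" and "pd_op Sy"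
    and y_gap: "(\<lambda>k. y k - yt k) \<longlonglongrightarrow> 0"
  shows "bounded (range (\<lambda>k. (x (k + 2), y (k + 2), z (k + 2))))"
proof -
  obtain Cx Cy Cz where C: "\<And>k. k \<ge> 2 \<Longrightarrow> norm (x k - xb) \<le> Cx"
    "\<And>k. k \<ge> 1 \<Longrightarrow> norm (yt k - yb) \<le> Cy" "\<And>k. k \<ge> 1 \<Longrightarrow> norm (z k - zb) \<le> Cz"
    using iterate_norm_bounds[OF assms(1-3)] by blast
  obtain Cg where Cg: "\<And>k. norm (y k - yt k) \<le> Cg"
    using convergent_imp_Bseq[of "\<lambda>k. y k - yt k"] y_gap by (auto simp: convergent_def Bseq_def)
  have "norm (x (k + 2)) \<le> norm xb + Cx" for k
    using C(1)[of "k + 2"] norm_triangle_sub[of "x (k + 2)" xb] by linarith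
  then have bx: "bounded (range (\<lambda>k. x (k + 2)))"
    unfolding bounded_iff by (intro exI[of _ "norm xb + Cx"]) auto
  have "norm (y (k + 2)) \<le> norm yb + Cy + Cg" for k
  proof -
    have "norm (y (k + 2)) \<le> norm (yt (k + 2)) + norm (y (k + 2) - yt (k + 2))"
      by (rule norm_triangle_sub)
    moreover have "norm (yt (k + 2)) \<le> norm yb + norm (yt (k + 2) - yb)"
      by (rule norm_triangle_sub)
    moreover have "norm (yt (k + 2) - yb) \<le> Cy" by (rule C(2)) simp
    ultimately show ?thesis using Cg[of "k + 2"] by linarith
  qed
  then have by': "bounded (range (\<lambda>k. y (k + 2)))"
    unfolding bounded_iff by (intro exI[of _ "norm yb + Cy + Cg"]) auto
  have "norm (z (k + 2)) \<le> norm zb + Cz" for k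
    using C(3)[of "k + 2"] norm_triangle_sub[of "z (k + 2)" zb] by linarith
  then have bz: "bounded (range (\<lambda>k. z (k + 2)))"
    unfolding bounded_iff by (intro exI[of _ "norm zb + Cz"]) auto
  have "range (\<lambda>k. (x (k + 2), y (k + 2), z (k + 2)))
      \<subseteq> range (\<lambda>k. x (k + 2)) \<times> range (\<lambda>k. y (k + 2)) \<times> range (\<lambda>k. z (k + 2))"
    by auto
  then show ?thesis by (rule bounded_subset[OF bounded_Times[OF bx bounded_Times[OF by' bz]]])
qed

lemma cluster_point_in_Wstar:
  assumes s: "strict_mono s"
    and xs: "(\<lambda>j. x (s j)) \<longlonglongrightarrow> x0" and ys: "(\<lambda>j. y (s j)) \<longlonglongrightarrow> y0" and zs: "(\<lambda>j. z (s j)) \<longlonglongrightarrow> z0"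
    and x_gap: "(\<lambda>k. x k - xt k) \<longlonglongrightarrow> 0" and y_gap: "(\<lambda>k. y k - yt k) \<longlonglongrightarrow> 0"
    and z_gap: "(\<lambda>k. z k - zt k) \<longlonglongrightarrow> 0" and res: "(\<lambda>k. At (x k) + Bt (y k) - c) \<longlonglongrightarrow> 0"
  shows "(x0, y0, z0) \<in> Wstar gf1 f2 gh1 h2 A B c"
proof -
  have sub: "(\<lambda>j. f (s j)) \<longlonglongrightarrow> l" if "f \<longlonglongrightarrow> l" for f :: "nat \<Rightarrow> 'w::topological_space" and l
    using LIMSEQ_subseq_LIMSEQ[OF that s] by (simp add: o_def)
  have "(\<lambda>j. x (s j) - (x (s j) - xt (s j))) \<longlonglongrightarrow> x0 - 0"
    "(\<lambda>j. y (s j) - (y (s j) - yt (s j))) \<longlonglongrightarrow> y0 - 0"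
    "(\<lambda>j. z (s j) - (z (s j) - zt (s j))) \<longlonglongrightarrow> z0 - 0"
    by (intro tendsto_intros xs ys zs sub[OF x_gap] sub[OF y_gap] sub[OF z_gap])+
  then have xts: "(\<lambda>j. xt (s j)) \<longlonglongrightarrow> x0" and yts: "(\<lambda>j. yt (s j)) \<longlonglongrightarrow> y0"
    and zts: "(\<lambda>j. zt (s j)) \<longlonglongrightarrow> z0" by simp_all
  have "(\<lambda>j. At (x (s j)) + Bt (y (s j)) - c) \<longlonglongrightarrow> At x0 + Bt y0 - c"
    by (intro tendsto_intros tendsto_linear[OF linAt xs] tendsto_linear[OF linBt ys])
  then have feasible: "At x0 + Bt y0 = c" using LIMSEQ_unique[OF _ sub[OF res]] by fastforce
  define gx where "gx k = gf1 (xt k) + \<sigma> *\<^sub>R A (At (xt k) + Bt (yt k) - c + (1 / \<sigma>) *\<^sub>R zt k) - F (xt k)" for k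
  define gy where "gy k = gh1 (yt k) + \<sigma> *\<^sub>R B (At (x k) + Bt (yt k) - c + (1 / \<sigma>) *\<^sub>R z k) - H (yt k)" for k
  have gx_lim: "(\<lambda>j. gx (s j)) \<longlonglongrightarrow> gf1 x0 + \<sigma> *\<^sub>R A (At x0 + Bt y0 - c + (1 / \<sigma>) *\<^sub>R z0) - F x0"
    unfolding gx_def
    by (intro tendsto_intros lipschitz_tendsto[OF f1_lip xts] tendsto_linear[OF linA]
        tendsto_linear[OF linF xts] tendsto_linear[OF linAt xts] tendsto_linear[OF linBt yts] zts)
  have gy_lim: "(\<lambda>j. gy (s j)) \<longlonglongrightarrow> gh1 y0 + \<sigma> *\<^sub>R B (At x0 + Bt y0 - c + (1 / \<sigma>) *\<^sub>R z0) - H y0"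
    unfolding gy_def
    by (intro tendsto_intros lipschitz_tendsto[OF h1_lip yts] tendsto_linear[OF linB]
        tendsto_linear[OF linH yts] tendsto_linear[OF linAt xs] tendsto_linear[OF linBt yts] zs)
  have "f2 x0 \<noteq> \<infinity> \<and> (\<forall>u. f2 x0 + ereal ((- (F x0 + (gf1 x0
      + \<sigma> *\<^sub>R A (At x0 + Bt y0 - c + (1 / \<sigma>) *\<^sub>R z0) - F x0))) \<bullet> (u - x0)) \<le> f2 u)"
    by (rule limit_of_quadratic_minimizers[OF f2_props F_psd xs gx_lim]) (unfold gx_def, rule x_step)
  moreover have "h2 y0 \<noteq> \<infinity> \<and> (\<forall>v. h2 y0 + ereal ((- (H y0 + (gh1 y0
      + \<sigma> *\<^sub>R B (At x0 + Bt y0 - c + (1 / \<sigma>) *\<^sub>R z0) - H y0))) \<bullet> (v - y0)) \<le> h2 v)"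
    by (rule limit_of_quadratic_minimizers[OF h2_props H_psd ys gy_lim]) (unfold gy_def, rule y_step)
  moreover have "\<sigma> *\<^sub>R A (At x0 + Bt y0 - c + (1 / \<sigma>) *\<^sub>R z0) = A z0"
    "\<sigma> *\<^sub>R B (At x0 + Bt y0 - c + (1 / \<sigma>) *\<^sub>R z0) = B z0"
    using feasible sigma_pos by (simp_all add: linear_scale[OF linA] linear_scale[OF linB])
  ultimately show ?thesis
    using feasible by (intro WstarI) (simp_all add: At_def Bt_def)
qed

lemma E_tendsto_zero_along_cluster:
  assumes s: "strict_mono s" "\<And>j. s j \<ge> 1"
    and xs: "(\<lambda>j. x (s j)) \<longlonglongrightarrow> x0" and ys: "(\<lambda>j. y (s j)) \<longlonglongrightarrow> y0" and zs: "(\<lambda>j. z (s j)) \<longlonglongrightarrow> z0"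
    and x_gap: "(\<lambda>k. x k - xt k) \<longlonglongrightarrow> 0" and y_gap: "(\<lambda>k. y k - yt k) \<longlonglongrightarrow> 0"
    and res_next: "(\<lambda>k. At (x (Suc k)) + Bt (y k) - c) \<longlonglongrightarrow> 0"
  shows "(\<lambda>j. E lam x0 y0 z0 (s j)) \<longlonglongrightarrow> 0"
proof -
  have sub: "(\<lambda>j. f (s j)) \<longlonglongrightarrow> l" if "f \<longlonglongrightarrow> l" for f :: "nat \<Rightarrow> 'w::topological_space" and l
    using LIMSEQ_subseq_LIMSEQ[OF that s(1)] by (simp add: o_def)
  have "(\<lambda>j. x (s j) - (x (s j) - xt (s j))) \<longlonglongrightarrow> x0 - 0"
    "(\<lambda>j. y (s j) - (y (s j) - yt (s j))) \<longlonglongrightarrow> y0 - 0"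
    by (intro tendsto_intros xs ys sub[OF x_gap] sub[OF y_gap])+
  then have xts: "(\<lambda>j. xt (s j)) \<longlonglongrightarrow> x0" and yts: "(\<lambda>j. yt (s j)) \<longlonglongrightarrow> y0" by simp_all
  have "(\<lambda>j. xt (s j) + \<rho> *\<^sub>R (x (s j) - xt (s j))) \<longlonglongrightarrow> x0 + \<rho> *\<^sub>R 0"
    by (intro tendsto_intros xts sub[OF x_gap])
  then have xts1: "(\<lambda>j. xt (s j + 1)) \<longlonglongrightarrow> x0" by (simp add: relax_x)
  have "strict_mono (\<lambda>j. s j - 1)"
    using s unfolding strict_mono_def by (metis diff_less_mono)
  then have "(\<lambda>j. At (x (Suc (s j - 1))) + Bt (y (s j - 1)) - c) \<longlonglongrightarrow> 0"
    using LIMSEQ_subseq_LIMSEQ[OF res_next] by (simp add: o_def)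
  moreover have "Suc (s j - 1) = s j" for j using s(2)[of j] by simp
  ultimately have res_s: "(\<lambda>j. At (x (s j)) + Bt (y (s j - 1)) - c) \<longlonglongrightarrow> 0"
    by (simp only:)
  have "(\<lambda>j. (1 / (\<sigma> * \<rho>)) * (norm (z (s j) - z0 + (\<sigma> * (\<rho> - 1)) *\<^sub>R At (x (s j) - x0)))\<^sup>2
      + \<sigma> * (2 - \<rho>) * (norm (At (x (s j) - x0)))\<^sup>2 + (1 / \<rho>) * qn Sx (xt (s j + 1) - x0)
      + (1 / \<rho>) * qn Sy (yt (s j) - y0) + (2 - \<rho>) * qn Sx (xt (s j) - x (s j))
      + \<sigma> * (1 - lam) * (2 - \<rho>) * (norm (At (x (s j)) + Bt (y (s j - 1)) - c))\<^sup>2)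
    \<longlonglongrightarrow> (1 / (\<sigma> * \<rho>)) * (norm (z0 - z0 + (\<sigma> * (\<rho> - 1)) *\<^sub>R At (x0 - x0)))\<^sup>2
      + \<sigma> * (2 - \<rho>) * (norm (At (x0 - x0)))\<^sup>2 + (1 / \<rho>) * qn Sx (x0 - x0) + (1 / \<rho>) * qn Sy (y0 - y0)
      + (2 - \<rho>) * qn Sx (x0 - x0) + \<sigma> * (1 - lam) * (2 - \<rho>) * (norm (0::'z))\<^sup>2"
    by (intro tendsto_intros zs tendsto_linear[OF linAt] tendsto_qn[OF linSx] tendsto_qn[OF linSy]
        xs ys xts xts1 yts res_s)
  then show ?thesis unfolding E_expand
    by (simp add: qn_def linear_0[OF linAt] linear_0[OF linSx] linear_0[OF linSy])
qed

lemma iterates_converge_if_E_tendsto_zero: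
  assumes lam: "lam \<le> 1" and Sy_pd: "pd_op Sy" and E0: "E lam x0 y0 z0 \<longlonglongrightarrow> 0"
    and y_gap: "(\<lambda>k. y k - yt k) \<longlonglongrightarrow> 0"
  shows "x \<longlonglongrightarrow> x0" and "y \<longlonglongrightarrow> y0" and "z \<longlonglongrightarrow> z0"
proof -
  note le_E = E_summands_le[OF lam order_refl, where xb=x0 and yb=y0 and zb=z0]
  have pos: "\<sigma> * (2 - \<rho>) > 0" "1 / (\<sigma> * \<rho>) > 0" "1 / \<rho> > 0" "2 - \<rho> > 0"
    using sigma_pos rho by auto
  have A_lim: "(\<lambda>k. At (x k - x0)) \<longlonglongrightarrow> 0"
    by (rule tendsto_zero_if_norm_sq_tendsto_zero,
        rule tendsto_zero_if_scaled_le[OF pos(1) _ le_E(2) E0]) simp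
  have "(\<lambda>k. z k - z0 + (\<sigma> * (\<rho> - 1)) *\<^sub>R At (x k - x0)) \<longlonglongrightarrow> 0"
    by (rule tendsto_zero_if_norm_sq_tendsto_zero,
        rule tendsto_zero_if_scaled_le[OF pos(2) _ le_E(1) E0]) simp
  then have "(\<lambda>k. (z k - z0 + (\<sigma> * (\<rho> - 1)) *\<^sub>R At (x k - x0)) - (\<sigma> * (\<rho> - 1)) *\<^sub>R At (x k - x0))
      \<longlonglongrightarrow> 0 - (\<sigma> * (\<rho> - 1)) *\<^sub>R 0"
    by (intro tendsto_intros A_lim)
  then show "z \<longlonglongrightarrow> z0" by (simp add: LIM_zero_iff)
  have "(\<lambda>k. qn Sy (yt k - y0)) \<longlonglongrightarrow> 0"
    by (rule tendsto_zero_if_scaled_le[OF pos(3) qn_nonneg[OF Sy_psd] le_E(4) E0])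
  then have "(\<lambda>k. (yt k - y0) + (y k - yt k)) \<longlonglongrightarrow> 0 + 0"
    by (rule tendsto_add[OF tendsto_zero_if_qn_tendsto_zero[OF Sy_pd] y_gap])
  then show "y \<longlonglongrightarrow> y0" by (simp add: LIM_zero_iff)
  have "(\<lambda>k. qn Sx (xt (k + 1) - x0)) \<longlonglongrightarrow> 0"
    by (rule tendsto_zero_if_scaled_le[OF pos(3) qn_nonneg[OF Sx_psd] le_E(3) E0])
  then have a1: "(\<lambda>k. qn Sx (xt k - x0)) \<longlonglongrightarrow> 0" by (rule LIMSEQ_offset)
  have a2: "(\<lambda>k. qn Sx (x k - xt k)) \<longlonglongrightarrow> 0"
    using tendsto_zero_if_scaled_le[OF pos(4) qn_nonneg[OF Sx_psd] le_E(5) E0]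
    by (simp add: qn_minus_commute[OF linSx, of "x _"])
  have a3: "(\<lambda>k. \<sigma> * (norm (At (x k - x0)))\<^sup>2) \<longlonglongrightarrow> \<sigma> * (norm (0::'z))\<^sup>2"
    by (intro tendsto_intros A_lim)
  have bound_lim: "(\<lambda>k. 2 * qn Sx (xt k - x0) + 2 * qn Sx (x k - xt k)
      + \<sigma> * (norm (At (x k - x0)))\<^sup>2) \<longlonglongrightarrow> 0"
    using tendsto_add[OF tendsto_add[OF tendsto_mult_left[OF a1] tendsto_mult_left[OF a2]] a3] by simp
  have bF: "1 * qn F (x k - x0) \<le> 2 * qn Sx (xt k - x0) + 2 * qn Sx (x k - xt k) + \<sigma> * (norm (At (x k - x0)))\<^sup>2" for k
    using qn_add_le_sum[OF Sx_psd, of "xt k - x0" "x k - xt k"] unfolding qn_F by simp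
  have "(\<lambda>k. qn F (x k - x0)) \<longlonglongrightarrow> 0"
    by (rule tendsto_zero_if_scaled_le[OF _ qn_nonneg[OF F_psd] bF bound_lim]) simp
  then show "x \<longlonglongrightarrow> x0" by (rule LIM_zero_cancel[OF tendsto_zero_if_qn_tendsto_zero[OF F_pd]])
qed

text \<open>Bounded iterates have a cluster point, which is a KKT point; applying the quasi-Fej\'er
  property at that point shows that its Lyapunov function, being zero along the cluster
  subsequence, tends to zero.\<close>
lemma gadmm_convergence:
  fixes lam :: real
  assumes kkt: "(xb, yb, zb) \<in> Wstar gf1 f2 gh1 h2 A B c" and lam: "1/2 < lam" "lam \<le> 1"
    and Sy_pd: "pd_op Sy" and xi: "summable xi"
  shows "\<exists>x0 y0 z0. x \<longlonglongrightarrow> x0 \<and> y \<longlonglongrightarrow> y0 \<and> z \<longlonglongrightarrow> z0 \<and> (x0, y0, z0) \<in> Wstar gf1 f2 gh1 h2 A B c"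
proof -
  have lam': "1/2 \<le> lam" using lam(1) by simp
  note fejer = E_quasi_fejer[OF kkt lam' lam(2) xi]
  note steps = delta_tendsto_zero_consequences[OF lam Sy_pd fejer(2)]
  have x_gap: "(\<lambda>k. x k - xt k) \<longlonglongrightarrow> 0" by (rule x_gap_tendsto_zero[OF steps(2)])
  have res: "(\<lambda>k. At (x k) + Bt (y k) - c) \<longlonglongrightarrow> 0" by (rule residual_tendsto_zero[OF steps(1,2)])
  have z_gap: "(\<lambda>k. z k - zt k) \<longlonglongrightarrow> 0" by (rule z_gap_tendsto_zero[OF res steps(3)])
  have "E lam xb yb zb n \<le> E lam xb yb zb 1 + suminf xi" if "n \<ge> 1" for n
    using fejer(1) that by blast
  then have "bounded (range (\<lambda>k. (x (k + 2), y (k + 2), z (k + 2))))"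
    by (rule iterates_bounded[OF lam(2) _ Sy_pd steps(3)])
  then obtain r l where r: "strict_mono r"
    and lim: "((\<lambda>k. (x (k + 2), y (k + 2), z (k + 2))) \<circ> r) \<longlonglongrightarrow> l"
    using bounded_imp_convergent_subsequence by blast
  obtain x0 y0 z0 where "l = (x0, y0, z0)" by (cases l) auto
  with lim have lim: "((\<lambda>k. (x (k + 2), y (k + 2), z (k + 2))) \<circ> r) \<longlonglongrightarrow> (x0, y0, z0)" by simp
  define s where "s j = r j + 2" for j
  have s: "strict_mono s" "\<And>j. s j \<ge> 1" using r by (simp_all add: s_def strict_mono_def)
  have xs: "(\<lambda>j. x (s j)) \<longlonglongrightarrow> x0" and ys: "(\<lambda>j. y (s j)) \<longlonglongrightarrow> y0" and zs: "(\<lambda>j. z (s j)) \<longlonglongrightarrow> z0"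
    using tendsto_fst[OF lim] tendsto_fst[OF tendsto_snd[OF lim]] tendsto_snd[OF tendsto_snd[OF lim]]
    by (simp_all add: s_def o_def)
  have kkt0: "(x0, y0, z0) \<in> Wstar gf1 f2 gh1 h2 A B c"
    by (rule cluster_point_in_Wstar[OF s(1) xs ys zs x_gap steps(3) z_gap res])
  obtain L where L: "E lam x0 y0 z0 \<longlonglongrightarrow> L"
    using E_quasi_fejer(3)[OF kkt0 lam' lam(2) xi] by (auto simp: convergent_def)
  moreover have "(\<lambda>j. E lam x0 y0 z0 (s j)) \<longlonglongrightarrow> L"
    using LIMSEQ_subseq_LIMSEQ[OF L s(1)] by (simp add: o_def)
  then have "L = 0"
    using E_tendsto_zero_along_cluster[OF s xs ys zs x_gap steps(3,1)] by (rule LIMSEQ_unique)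
  ultimately have E0: "E lam x0 y0 z0 \<longlonglongrightarrow> 0" by simp
  show ?thesis
    using iterates_converge_if_E_tendsto_zero[OF lam(2) Sy_pd E0 steps(3)] kkt0 by blast
qed

lemma f1_supporting: "f1 u' + (u - u') \<bullet> gf1 u' \<le> f1 u"
  using f1_bounds[of u u'] qn_nonneg[OF SF_psd, of "u - u'"] by linarith

lemma h1_supporting: "h1 v' + (v - v') \<bullet> gh1 v' \<le> h1 v"
  using h1_bounds[of v v'] qn_nonneg[OF SH_psd, of "v - v'"] by linarith

lemma gadmm_converges_to_optimum:
  fixes lam :: real
  assumes "(xb, yb, zb) \<in> Wstar gf1 f2 gh1 h2 A B c" and "1/2 < lam" "lam \<le> 1"
    and "pd_op Sy" and "summable xi"
  shows "\<exists>x0 y0 z0. x \<longlonglongrightarrow> x0 \<and> y \<longlonglongrightarrow> y0 \<and> z \<longlonglongrightarrow> z0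
             \<and> primal_optimal f1 f2 h1 h2 A B c x0 y0 \<and> dual_optimal f1 f2 h1 h2 A B c z0
             \<and> (x0, y0, z0) \<in> Wstar gf1 f2 gh1 h2 A B c"
  using gadmm_convergence[OF assms]
    Wstar_optimal[OF _ linA linB f2_props(2) h2_props(2) f1_supporting h1_supporting] by blast

end

theorem mainTheorem5:
  fixes f1 :: "'x::euclidean_space \<Rightarrow> real" and gf1 :: "'x \<Rightarrow> 'x"
    and f2 :: "'x \<Rightarrow> ereal"
    and h1 :: "'y::euclidean_space \<Rightarrow> real" and gh1 :: "'y \<Rightarrow> 'y"
    and h2 :: "'y \<Rightarrow> ereal"
    and A :: "'z::euclidean_space \<Rightarrow> 'x" and B :: "'z \<Rightarrow> 'y" and c :: 'z
    and SF SFh S :: "'x \<Rightarrow> 'x" and SH SHh T :: "'y \<Rightarrow> 'y"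
    and \<sigma> \<rho> lam :: real
    and x xt :: "nat \<Rightarrow> 'x" and y yt :: "nat \<Rightarrow> 'y" and z zt :: "nat \<Rightarrow> 'z"
    and xb :: 'x and yb :: 'y and zb :: 'z
  defines "At \<equiv> adjoint A" and "Bt \<equiv> adjoint B"
  defines "F \<equiv> (\<lambda>u. SFh u + S u + \<sigma> *\<^sub>R A (At u))"
  defines "H \<equiv> (\<lambda>v. SHh v + T v + \<sigma> *\<^sub>R B (Bt v))"
  defines "Psi \<equiv> (\<lambda>k. (1 / (\<sigma> * \<rho>)) * (norm (z k - zb + (\<sigma> * (\<rho> - 1)) *\<^sub>R At (x k - xb)))\<^sup>2
                      + \<sigma> * (2 - \<rho>) * (norm (At (x k - xb)))\<^sup>2
                      + (1 / \<rho>) * qn (opadd SFh S) (xt (k + 1) - xb)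
                      + (1 / \<rho>) * qn (opadd SHh T) (yt k - yb))"
  defines "delta \<equiv> (\<lambda>k. qn (\<lambda>u. (1/2) *\<^sub>R SF u) (xt (k + 1) - x (k + 1))
                      + qn (\<lambda>v. (1/2) *\<^sub>R SH v + (2 - \<rho>) *\<^sub>R (SHh v + T v)) (yt k - y k)
                      + (1 - lam) * (2 - \<rho>) * qn (opadd SFh S) (xt k - x k)
                      + \<sigma> * (2 * lam - 1) * (2 - \<rho>) * (norm (At (x (k + 1)) + Bt (y k) - c))\<^sup>2
                      + (\<sigma> * (1 - lam) * (2 - \<rho>) / 2) * (norm (Bt (y k - y (k - 1))))\<^sup>2
                      + (lam * (2 - \<rho>)\<^sup>2 / \<rho>) * qn F (x (k + 1) - x k))"
  defines "xi \<equiv> (\<lambda>k. qn SFh (xt (k + 1) - x (k + 1)) + qn SHh (yt k - y k))"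
  defines "E \<equiv> (\<lambda>k. Psi k + (2 - \<rho>) * qn (opadd SFh S) (xt k - x k)
                      + \<sigma> * (1 - lam) * (2 - \<rho>) * (norm (At (x k) + Bt (y (k - 1)) - c))\<^sup>2)"
  assumes linA: "linear A" and linB: "linear B"
  and f1_convex: "convex_on UNIV f1"
  and f1_grad: "\<And>u. (f1 has_derivative (\<lambda>d. gf1 u \<bullet> d)) (at u)"
  and f1_lip: "\<exists>L. \<forall>u v. norm (gf1 u - gf1 v) \<le> L * norm (u - v)"
  and h1_convex: "convex_on UNIV h1"
  and h1_grad: "\<And>v. (h1 has_derivative (\<lambda>d. gh1 v \<bullet> d)) (at v)"
  and h1_lip: "\<exists>L. \<forall>u v. norm (gh1 u - gh1 v) \<le> L * norm (u - v)"
  and SF_psd: "psd_op SF" and SFh_psd: "psd_op SFh" and SF_le: "psd_op (\<lambda>u. SFh u - SF u)"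
  and SH_psd: "psd_op SH" and SHh_psd: "psd_op SHh" and SH_le: "psd_op (\<lambda>v. SHh v - SH v)"
  and f1_bounds: "\<And>u u'. (1/2) * qn SF (u - u') \<le> f1 u - f1 u' - (u - u') \<bullet> gf1 u'
                        \<and> f1 u - f1 u' - (u - u') \<bullet> gf1 u' \<le> (1/2) * qn SFh (u - u')"
  and h1_bounds: "\<And>v v'. (1/2) * qn SH (v - v') \<le> h1 v - h1 v' - (v - v') \<bullet> gh1 v'
                        \<and> h1 v - h1 v' - (v - v') \<bullet> gh1 v' \<le> (1/2) * qn SHh (v - v')"
  and f2_cpc: "closed_fun f2 \<and> proper_fun f2 \<and> convex_fun f2"
  and h2_cpc: "closed_fun h2 \<and> proper_fun h2 \<and> convex_fun h2"
  and CQ: "\<exists>x0 y0. (x0, y0) \<in> rel_interior (edom f2 \<times> edom h2) \<and> At x0 + Bt y0 = c"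
  and sigma_pos: "\<sigma> > 0" and rho: "0 < \<rho>" "\<rho> < 2"
  and S_psd: "psd_op S" and T_psd: "psd_op T"
  and F_pd: "pd_op F" and H_pd: "pd_op H"
  and init: "xt 0 \<in> edom f2" "yt 0 \<in> edom h2"
  and x_step: "\<And>k u. f2 (x k) + ereal ((1/2) * (x k \<bullet> F (x k))
              + (gf1 (xt k) + \<sigma> *\<^sub>R A (At (xt k) + Bt (yt k) - c + (1 / \<sigma>) *\<^sub>R zt k) - F (xt k)) \<bullet> x k)
           \<le> f2 u + ereal ((1/2) * (u \<bullet> F u)
              + (gf1 (xt k) + \<sigma> *\<^sub>R A (At (xt k) + Bt (yt k) - c + (1 / \<sigma>) *\<^sub>R zt k) - F (xt k)) \<bullet> u)"
  and z_step: "\<And>k. z k = zt k + \<sigma> *\<^sub>R (At (x k) + Bt (yt k) - c)"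
  and y_step: "\<And>k v. h2 (y k) + ereal ((1/2) * (y k \<bullet> H (y k))
              + (gh1 (yt k) + \<sigma> *\<^sub>R B (At (x k) + Bt (yt k) - c + (1 / \<sigma>) *\<^sub>R z k) - H (yt k)) \<bullet> y k)
           \<le> h2 v + ereal ((1/2) * (v \<bullet> H v)
              + (gh1 (yt k) + \<sigma> *\<^sub>R B (At (x k) + Bt (yt k) - c + (1 / \<sigma>) *\<^sub>R z k) - H (yt k)) \<bullet> v)"
  and relax: "\<And>k. xt (Suc k) = xt k + \<rho> *\<^sub>R (x k - xt k)"
             "\<And>k. yt (Suc k) = yt k + \<rho> *\<^sub>R (y k - yt k)"
             "\<And>k. zt (Suc k) = zt k + \<rho> *\<^sub>R (z k - zt k)"
  and KKT: "(xb, yb, zb) \<in> Wstar gf1 f2 gh1 h2 A B c"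
  and lam: "0 < lam" "lam \<le> 1"
  shows "(\<forall>k::nat. k > 1 \<longrightarrow> E k - E (k + 1) \<ge> delta k - xi k)
       \<and> ((1/2 < lam \<and> pd_op (opadd SHh T) \<and> pd_op F \<and> pd_op H \<and> summable xi) \<longrightarrow>
          (\<exists>xs ys zs. x \<longlonglongrightarrow> xs \<and> y \<longlonglongrightarrow> ys \<and> z \<longlonglongrightarrow> zs
             \<and> primal_optimal f1 f2 h1 h2 A B c xs ys
             \<and> dual_optimal f1 f2 h1 h2 A B c zs
             \<and> (xs, ys, zs) \<in> Wstar gf1 f2 gh1 h2 A B c))"
proof -
  interpret G: gadmm f1 gf1 f2 h1 gh1 h2 A B c SF SFh S SH SHh T \<sigma> \<rho> x xt y yt z zt At Bt F H
  proof (rule gadmm.intro)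
    show "At = adjoint A" "Bt = adjoint B" by (simp_all add: At_def Bt_def)
    show "F = (\<lambda>u. SFh u + S u + \<sigma> *\<^sub>R A (At u))" "H = (\<lambda>v. SHh v + T v + \<sigma> *\<^sub>R B (Bt v))"
      by (simp_all add: F_def H_def)
  qed (fact linA linB f1_lip h1_lip SF_psd SFh_psd SH_psd SHh_psd f1_bounds h1_bounds f2_cpc h2_cpc
         sigma_pos rho S_psd T_psd F_pd H_pd x_step z_step y_step relax)+
  have E_eq: "E = G.E lam xb yb zb" by (rule ext) (simp add: E_def Psi_def G.E_def G.Psi_def)
  have delta_eq: "delta = G.delta lam" by (rule ext) (simp add: delta_def G.delta_def)
  have xi_eq: "xi = G.xi" by (rule ext) (simp add: xi_def G.xi_def)
  show ?thesis
  proof (intro conjI allI impI)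
    fix k :: nat
    show "E k - E (k + 1) \<ge> delta k - xi k"
      unfolding E_eq delta_eq xi_eq by (rule G.E_descent[OF KKT less_imp_le[OF lam(1)] lam(2)])
  next
    assume "1/2 < lam \<and> pd_op (opadd SHh T) \<and> pd_op F \<and> pd_op H \<and> summable xi"
    then show "\<exists>xs ys zs. x \<longlonglongrightarrow> xs \<and> y \<longlonglongrightarrow> ys \<and> z \<longlonglongrightarrow> zs
             \<and> primal_optimal f1 f2 h1 h2 A B c xs ys \<and> dual_optimal f1 f2 h1 h2 A B c zs
             \<and> (xs, ys, zs) \<in> Wstar gf1 f2 gh1 h2 A B c"
      using G.gadmm_converges_to_optimum[OF KKT _ lam(2)] unfolding xi_eq G.Sy_def by blast
  qed
qed

end
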